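(* Let $X$ be a countable Markov shift over the alphabet $\mathbb N$, $\phi\colon X\to\mathbb R$ a measurable function and $\mu_\phi$ a Gibbs state for $\phi$ with constants $c_0\ge1$, $P\in\mathbb R$. Let $l\ge1$ be an integer, $\varphi_j\colon X\to\mathbb R$ continuous and $\alpha_j\in\mathbb R$ for $j=1,\dots,l$. Then there exists $n_1>1$ such that the following holds: for every integer $n\ge n_1$, every $a\in\mathbb N$ and every finite subset $G^n\subset E^n(a,a)$ with $\inf_{[G^n]}S_{n-1}\varphi_j>\alpha_j(n-1)$ for $j=1,\dots,l$, there exists a $\sigma$-invariant measure $\mu\in\mathcal M$ supported on a compact set such that $$\log\mu_\phi[G^n]\le F(\mu)(n-1)+\log c_0\quad\text{and}\quad\int\varphi_j\,d\mu>\alpha_j\ \text{for } j=1,\dots,l.$$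
   Context: $\mathbb N=\{0,1,\dots\}$; $A$ is a 0-1 matrix indexed by $\mathbb N$ without zero rows or columns; $X=\{x\in\mathbb N^{\mathbb N}:A_{x_ix_{i+1}}=1\ \forall i\}$ with product topology and left shift $\sigma$. $E^n$ is the set of admissible strings of length $n$, $E^n(a,b)=\{w\in E^n:w_0=a,\ w_{n-1}=b\}$, $[w]$ the cylinder of $w$, and $[W]=\bigcup_{w\in W}[w]$. $S_n\varphi=\sum_{i<n}\varphi\circ\sigma^i$. Gibbs state: $c_0^{-1}\le\mu_\phi[x_0,\dots,x_{n-1}]/\exp(-Pn+S_n\phi(x))\le c_0$ for all $n\ge1$, $x\in X$. $\mathcal M$: Borel probability measures on $X$. $h$: Kolmogorov–Sinai entropy w.r.t. $\sigma$; $\sup\phi<\infty$ for such $\phi$; $\mathcal M_\phi(\sigma)$ is the set of $\sigma$-invariant $\nu\in\mathcal M$ with $\int\phi\,d\nu>-\infty$; $F(\nu)=-P+h(\nu)+\int\phi\,d\nu$ for $\nu\in\mathcal M_\phi(\sigma)$ and $F(\nu)=-\infty$ otherwise. *)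

theory Defs
  imports "HOL-Probability.Probability"
begin

(* Countable Markov shift over the alphabet nat with 0-1 transition matrix A
   (A i j = True means the (i,j) entry is 1). *)

definition no_zero_rows_cols :: "(nat \<Rightarrow> nat \<Rightarrow> bool) \<Rightarrow> bool" where
  "no_zero_rows_cols A \<longleftrightarrow> (\<forall>i. \<exists>j. A i j) \<and> (\<forall>j. \<exists>i. A i j)"

definition shift_space :: "(nat \<Rightarrow> nat \<Rightarrow> bool) \<Rightarrow> (nat \<Rightarrow> nat) set" where
  "shift_space A = {x. \<forall>i. A (x i) (x (Suc i))}"

definition shift :: "(nat \<Rightarrow> nat) \<Rightarrow> (nat \<Rightarrow> nat)" where
  "shift x = (\<lambda>i. x (Suc i))"

definition borelX :: "(nat \<Rightarrow> nat \<Rightarrow> bool) \<Rightarrow> (nat \<Rightarrow> nat) measure" where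
  "borelX A = restrict_space borel (shift_space A)"

definition birkhoff :: "nat \<Rightarrow> ((nat \<Rightarrow> nat) \<Rightarrow> real) \<Rightarrow> (nat \<Rightarrow> nat) \<Rightarrow> real" where
  "birkhoff n f x = (\<Sum>i<n. f ((shift ^^ i) x))"

definition adm_words :: "(nat \<Rightarrow> nat \<Rightarrow> bool) \<Rightarrow> nat \<Rightarrow> nat list set" where
  "adm_words A n = {w. length w = n \<and> (\<forall>i. Suc i < n \<longrightarrow> A (w ! i) (w ! Suc i))}"

definition adm_words_ab :: "(nat \<Rightarrow> nat \<Rightarrow> bool) \<Rightarrow> nat \<Rightarrow> nat \<Rightarrow> nat \<Rightarrow> nat list set" where
  "adm_words_ab A n a b = {w \<in> adm_words A n. w ! 0 = a \<and> w ! (n - 1) = b}"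

definition cyl :: "(nat \<Rightarrow> nat \<Rightarrow> bool) \<Rightarrow> nat list \<Rightarrow> (nat \<Rightarrow> nat) set" where
  "cyl A w = {x \<in> shift_space A. \<forall>i<length w. x i = w ! i}"

definition cylset :: "(nat \<Rightarrow> nat \<Rightarrow> bool) \<Rightarrow> nat list set \<Rightarrow> (nat \<Rightarrow> nat) set" where
  "cylset A W = (\<Union>w\<in>W. cyl A w)"

definition prob_on_X :: "(nat \<Rightarrow> nat \<Rightarrow> bool) \<Rightarrow> (nat \<Rightarrow> nat) measure \<Rightarrow> bool" where
  "prob_on_X A \<mu> \<longleftrightarrow> prob_space \<mu> \<and> sets \<mu> = sets (borelX A)"

definition shift_invariant :: "(nat \<Rightarrow> nat \<Rightarrow> bool) \<Rightarrow> (nat \<Rightarrow> nat) measure \<Rightarrow> bool" where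
  "shift_invariant A \<mu> \<longleftrightarrow> prob_on_X A \<mu> \<and>
     (\<forall>B\<in>sets \<mu>. emeasure \<mu> (shift -` B \<inter> shift_space A) = emeasure \<mu> B)"

definition gibbs_state :: "(nat \<Rightarrow> nat \<Rightarrow> bool) \<Rightarrow> ((nat \<Rightarrow> nat) \<Rightarrow> real) \<Rightarrow>
    (nat \<Rightarrow> nat) measure \<Rightarrow> real \<Rightarrow> real \<Rightarrow> bool" where
  "gibbs_state A \<phi> \<mu> c0 P \<longleftrightarrow> prob_on_X A \<mu> \<and>
     (\<forall>n\<ge>1. \<forall>x\<in>shift_space A.
        inverse c0 \<le> measure \<mu> (cyl A (map x [0..<n])) / exp (- P * real n + birkhoff n \<phi> x) \<and>
        measure \<mu> (cyl A (map x [0..<n])) / exp (- P * real n + birkhoff n \<phi> x) \<le> c0)"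

definition fin_partition :: "(nat \<Rightarrow> nat) measure \<Rightarrow> (nat \<Rightarrow> nat) set set \<Rightarrow> bool" where
  "fin_partition \<mu> \<P> \<longleftrightarrow> finite \<P> \<and> \<P> \<subseteq> sets \<mu> \<and> \<Union>\<P> = space \<mu> \<and>
     (\<forall>p\<in>\<P>. \<forall>q\<in>\<P>. p \<noteq> q \<longrightarrow> p \<inter> q = {})"

definition part_entropy :: "(nat \<Rightarrow> nat) measure \<Rightarrow> (nat \<Rightarrow> nat) set set \<Rightarrow> real" where
  "part_entropy \<mu> \<P> = (\<Sum>p\<in>\<P>. if measure \<mu> p = 0 then 0 else - measure \<mu> p * ln (measure \<mu> p))"

definition join_iter :: "(nat \<Rightarrow> nat) measure \<Rightarrow> (nat \<Rightarrow> nat) set set \<Rightarrow> nat \<Rightarrow> (nat \<Rightarrow> nat) set set" where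
  "join_iter \<mu> \<P> n = {space \<mu> \<inter> (\<Inter>i<n. (shift ^^ i) -` p i) | p. \<forall>i<n. p i \<in> \<P>}"

definition ks_entropy_part :: "(nat \<Rightarrow> nat) measure \<Rightarrow> (nat \<Rightarrow> nat) set set \<Rightarrow> real" where
  "ks_entropy_part \<mu> \<P> = lim (\<lambda>n. part_entropy \<mu> (join_iter \<mu> \<P> (Suc n)) / real (Suc n))"

definition ks_entropy :: "(nat \<Rightarrow> nat) measure \<Rightarrow> ereal" where
  "ks_entropy \<mu> = (SUP \<P>\<in>{\<P>. fin_partition \<mu> \<P>}. ereal (ks_entropy_part \<mu> \<P>))"

(* M_phi(sigma): invariant measures with  int phi > -infinity *)
definition M_phi :: "(nat \<Rightarrow> nat \<Rightarrow> bool) \<Rightarrow> ((nat \<Rightarrow> nat) \<Rightarrow> real) \<Rightarrow> (nat \<Rightarrow> nat) measure set" where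
  "M_phi A \<phi> = {\<nu>. shift_invariant A \<nu> \<and> \<phi> \<in> borel_measurable \<nu> \<and>
                    (\<integral>\<^sup>+ x. ennreal (- \<phi> x) \<partial>\<nu>) < \<infinity>}"

definition free_energy :: "(nat \<Rightarrow> nat \<Rightarrow> bool) \<Rightarrow> ((nat \<Rightarrow> nat) \<Rightarrow> real) \<Rightarrow> real \<Rightarrow>
    (nat \<Rightarrow> nat) measure \<Rightarrow> ereal" where
  "free_energy A \<phi> P \<nu> = (if \<nu> \<in> M_phi A \<phi>
      then ereal (- P) + ks_entropy \<nu> + ereal (integral\<^sup>L \<nu> \<phi>) else - \<infinity>)"

end

theory Submission
  imports Defs
begin

(* Dropping the final letter a from the words of G leaves a finite set U of loops at a of length
   m = n - 1.  Concatenating loops drawn independently from a law q on U, and averaging over the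
   m phases, gives a shift-invariant measure mu on the compact set of sequences over the letters
   of U; its entropy is at least H(q)/m, and m * integral f dmu is at least the q-average of
   inf over [u a] of S_m f.  For the Gibbs weights q_u proportional to exp t_u, with
   t_u = inf over [u] of S_m phi - P m, the Gibbs property gives
     mu_phi[G] <= c0 * sum_u exp t_u = c0 * exp (H(q) + sum_u q_u t_u) <= c0 * exp (m F(mu)),
   while the lower bound on the Birkhoff sums of the psi_j over [G] passes to their integrals. *)

section \<open>The entropy function\<close>

definition eta :: "real \<Rightarrow> real" where
  "eta p = (if p = 0 then 0 else - p * ln p)"

lemma eta_nonneg: "0 \<le> p \<Longrightarrow> p \<le> 1 \<Longrightarrow> 0 \<le> eta p"
  unfolding eta_def by (auto simp: mult_nonneg_nonpos ln_le_zero_iff)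

lemma eta_add_le:
  assumes "0 \<le> a" "0 \<le> b" shows "eta (a + b) \<le> eta a + eta b"
proof (cases "a = 0 \<or> b = 0")
  case True then show ?thesis using assms by (auto simp: eta_def)
next
  case False
  then have a: "a > 0" and b: "b > 0" using assms by auto
  have "a * ln a \<le> a * ln (a + b)" using a b by (intro mult_left_mono) auto
  moreover have "b * ln b \<le> b * ln (a + b)" using a b by (intro mult_left_mono) auto
  ultimately have "a * ln a + b * ln b \<le> a * ln (a + b) + b * ln (a + b)" by linarith
  then show ?thesis using a b by (simp add: eta_def algebra_simps)
qed

lemma eta_sum_le:
  assumes "finite S" "\<And>x. x \<in> S \<Longrightarrow> 0 \<le> f x"
  shows "eta (\<Sum>x\<in>S. f x) \<le> (\<Sum>x\<in>S. eta (f x))"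
  using assms
proof (induction S rule: finite_induct)
  case empty then show ?case by (simp add: eta_def)
next
  case (insert x S)
  have "eta (\<Sum>y\<in>insert x S. f y) \<le> eta (f x) + eta (\<Sum>y\<in>S. f y)"
    using insert by (simp add: eta_add_le sum_nonneg)
  then show ?case using insert by simp
qed

lemma eta_mult:
  assumes "0 \<le> a" "0 \<le> b" shows "eta (a * b) = a * eta b + b * eta a"
  using assms by (auto simp: eta_def ln_mult algebra_simps)

lemma eta_divide:
  assumes "0 \<le> p" "c > 0" shows "eta (p / c) = eta p / c + p * ln c / c"
  using assms by (auto simp: eta_def ln_div field_simps)

lemma mult_ln_diff_le:
  fixes p q :: real
  assumes "0 \<le> p" "0 < q" shows "p * ln q - p * ln p \<le> q - p"
proof (cases "p = 0")
  case False
  then have "p * ln (q / p) \<le> p * (q / p - 1)"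
    using assms by (intro mult_left_mono ln_le_minus_one) auto
  then show ?thesis using assms False by (simp add: ln_div algebra_simps)
qed (use assms in simp)

lemma mean_eta_le_eta_mean:
  assumes "finite R" "R \<noteq> {}" "\<And>r. r \<in> R \<Longrightarrow> 0 \<le> p r"
  shows "(\<Sum>r\<in>R. eta (p r)) / card R \<le> eta ((\<Sum>r\<in>R. p r) / card R)"
proof -
  define m where "m = real (card R)"
  have m: "m > 0" using assms unfolding m_def by (simp add: card_gt_0_iff)
  define P where "P = (\<Sum>r\<in>R. p r) / m"
  have P0: "P \<ge> 0" unfolding P_def using assms m by (auto intro!: divide_nonneg_pos sum_nonneg)
  show ?thesis
  proof (cases "P = 0")
    case True
    then have "(\<Sum>r\<in>R. p r) = 0" using m unfolding P_def by simp
    then have "\<forall>r\<in>R. p r = 0" using assms sum_nonneg_eq_0_iff by blast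
    then show ?thesis by (simp add: eta_def)
  next
    case False
    then have Pp: "P > 0" using P0 by simp
    have "(\<Sum>r\<in>R. p r * ln P - p r * ln (p r)) \<le> (\<Sum>r\<in>R. P - p r)"
      using assms(3) Pp by (intro sum_mono mult_ln_diff_le) auto
    also have "\<dots> = m * P - (\<Sum>r\<in>R. p r)" by (simp add: sum_subtractf m_def)
    also have "\<dots> = 0" using m unfolding P_def by simp
    finally have *: "(\<Sum>r\<in>R. p r) * ln P \<le> (\<Sum>r\<in>R. p r * ln (p r))"
      by (simp add: sum_subtractf sum_distrib_right)
    have "eta (p r) = - p r * ln (p r)" for r by (simp add: eta_def)
    then have "(\<Sum>r\<in>R. eta (p r)) / m = - (\<Sum>r\<in>R. p r * ln (p r)) / m"
      by (simp add: sum_negf)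
    also have "\<dots> \<le> - ((\<Sum>r\<in>R. p r) * ln P) / m"
      using * m by (intro divide_right_mono) auto
    also have "\<dots> = eta P" using Pp m unfolding P_def eta_def by (auto simp: field_simps)
    finally show ?thesis unfolding P_def m_def .
  qed
qed

lemma eta_mean_le_mean_eta:
  assumes "finite R" "R \<noteq> {}" "\<And>r. r \<in> R \<Longrightarrow> 0 \<le> p r"
  shows "eta ((\<Sum>r\<in>R. p r) / card R)
    \<le> (\<Sum>r\<in>R. eta (p r)) / card R + ln (card R) * (\<Sum>r\<in>R. p r) / card R"
proof -
  have c: "real (card R) > 0" using assms by (simp add: card_gt_0_iff)
  have "eta ((\<Sum>r\<in>R. p r) / card R) = eta (\<Sum>r\<in>R. p r / card R)"
    by (simp add: sum_divide_distrib)
  also have "\<dots> \<le> (\<Sum>r\<in>R. eta (p r / card R))" using assms c by (intro eta_sum_le) auto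
  also have "\<dots> = (\<Sum>r\<in>R. eta (p r) / card R + p r * ln (card R) / card R)"
    using assms c by (intro sum.cong refl eta_divide) auto
  also have "\<dots> = (\<Sum>r\<in>R. eta (p r)) / card R + ln (card R) * (\<Sum>r\<in>R. p r) / card R"
    by (simp add: sum.distrib sum_divide_distrib[symmetric] sum_distrib_left sum_distrib_right
        mult.commute)
  finally show ?thesis .
qed

lemma ln_sum_exp_eq:
  fixes t :: "'a \<Rightarrow> real"
  assumes "finite U" "U \<noteq> {}"
  defines "Z \<equiv> \<Sum>u\<in>U. exp (t u)"
  shows "ln Z = (\<Sum>u\<in>U. eta (exp (t u) / Z)) + (\<Sum>u\<in>U. exp (t u) / Z * t u)"
proof -
  have Z: "Z > 0" unfolding Z_def using assms by (intro sum_pos) auto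
  have "eta (exp (t u) / Z) = exp (t u) / Z * ln Z - exp (t u) / Z * t u" for u
    using Z by (simp add: eta_def ln_div field_simps)
  then have "(\<Sum>u\<in>U. eta (exp (t u) / Z)) = (\<Sum>u\<in>U. exp (t u)) / Z * ln Z
      - (\<Sum>u\<in>U. exp (t u) / Z * t u)"
    by (simp add: sum_subtractf sum_distrib_right sum_divide_distrib)
  then show ?thesis using Z by (simp add: Z_def[symmetric])
qed

lemma sum_fibres_le:
  fixes f :: "'a \<Rightarrow> real"
  assumes "finite S" "finite T" "\<And>x. x \<in> S \<Longrightarrow> 0 \<le> f x"
  shows "(\<Sum>y\<in>T. \<Sum>x\<in>{x\<in>S. g x = y}. f x) \<le> (\<Sum>x\<in>S. f x)"
proof -
  have "(\<Sum>y\<in>T. \<Sum>x\<in>{x\<in>S. g x = y}. f x) = (\<Sum>y\<in>T. \<Sum>x\<in>{x\<in>{x\<in>S. g x \<in> T}. g x = y}. f x)"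
    by (intro sum.cong refl) (auto intro!: sum.cong)
  also have "\<dots> = (\<Sum>x\<in>{x\<in>S. g x \<in> T}. f x)" using assms by (intro sum.group) auto
  also have "\<dots> \<le> (\<Sum>x\<in>S. f x)" using assms by (intro sum_mono2) auto
  finally show ?thesis .
qed

lemma measure_fibres_sum:
  assumes "prob_space M" "finite S" "\<And>s. s \<in> space M \<Longrightarrow> X s \<in> S"
    "\<And>x. {s\<in>space M. X s = x} \<in> sets M"
  shows "measure M {s\<in>space M. g (X s) = y} = (\<Sum>x\<in>{x\<in>S. g x = y}. measure M {s\<in>space M. X s = x})"
proof -
  interpret prob_space M by fact
  have "{s\<in>space M. g (X s) = y} = (\<Union>x\<in>{x\<in>S. g x = y}. {s\<in>space M. X s = x})"
    using assms(3) by auto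
  moreover have "measure M (\<Union>x\<in>{x\<in>S. g x = y}. {s\<in>space M. X s = x})
      = (\<Sum>x\<in>{x\<in>S. g x = y}. measure M {s\<in>space M. X s = x})"
    using assms by (intro finite_measure_finite_Union) (auto simp: disjoint_family_on_def)
  ultimately show ?thesis by simp
qed

lemma sum_measure_fibres_le_1:
  assumes "prob_space M" "finite T" "\<And>x. {s\<in>space M. X s = x} \<in> sets M"
  shows "(\<Sum>x\<in>T. measure M {s\<in>space M. X s = x}) \<le> 1"
proof -
  interpret prob_space M by fact
  have "(\<Sum>x\<in>T. measure M {s\<in>space M. X s = x}) = measure M (\<Union>x\<in>T. {s\<in>space M. X s = x})"
    using assms by (intro finite_measure_finite_Union[symmetric]) (auto simp: disjoint_family_on_def)
  then show ?thesis by simp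
qed

lemma entropy_of_function_le:
  assumes "prob_space M" "finite S" "finite T" "\<And>s. s \<in> space M \<Longrightarrow> X s \<in> S"
    "\<And>x. {s\<in>space M. X s = x} \<in> sets M"
    "\<And>s. s \<in> space M \<Longrightarrow> Y s = g (X s)"
  shows "(\<Sum>y\<in>T. eta (measure M {s\<in>space M. Y s = y}))
    \<le> (\<Sum>x\<in>S. eta (measure M {s\<in>space M. X s = x}))"
proof -
  interpret prob_space M by fact
  have "(\<Sum>y\<in>T. eta (measure M {s\<in>space M. Y s = y}))
      = (\<Sum>y\<in>T. eta (\<Sum>x\<in>{x\<in>S. g x = y}. measure M {s\<in>space M. X s = x}))"
    using assms(6) by (simp add: measure_fibres_sum[OF assms(1,2,4,5), symmetric] cong: conj_cong)
  also have "\<dots> \<le> (\<Sum>y\<in>T. \<Sum>x\<in>{x\<in>S. g x = y}. eta (measure M {s\<in>space M. X s = x}))"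
    using assms by (intro sum_mono eta_sum_le) auto
  also have "\<dots> \<le> (\<Sum>x\<in>S. eta (measure M {s\<in>space M. X s = x}))"
    using assms by (intro sum_fibres_le eta_nonneg) auto
  finally show ?thesis .
qed

definition tuples :: "'a set \<Rightarrow> nat \<Rightarrow> 'a list set" where
  "tuples U J = {ws. length ws = J \<and> set ws \<subseteq> U}"

lemma finite_tuples: "finite U \<Longrightarrow> finite (tuples U J)"
  unfolding tuples_def using finite_lists_length_eq[of U J] by (simp add: conj_commute)

lemma tuples_0: "tuples U 0 = {[]}" by (auto simp: tuples_def)

lemma sum_tuples_Suc:
  "(\<Sum>ws\<in>tuples U (Suc J). f ws) = (\<Sum>u\<in>U. \<Sum>ws\<in>tuples U J. f (u # ws))"
proof -
  have img: "tuples U (Suc J) = (\<lambda>(u, ws). u # ws) ` (U \<times> tuples U J)"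
    unfolding tuples_def by (auto simp: length_Suc_conv image_iff)
  have "inj_on (\<lambda>(u, ws). u # ws) (U \<times> tuples U J)" by (auto simp: inj_on_def)
  then show ?thesis
    unfolding img by (simp add: sum.reindex sum.cartesian_product comp_def case_prod_unfold)
qed

lemma sum_tuples_prod_list:
  fixes q :: "'a \<Rightarrow> real"
  assumes "(\<Sum>u\<in>U. q u) = 1"
  shows "(\<Sum>ws\<in>tuples U J. prod_list (map q ws)) = 1"
proof (induction J)
  case (Suc J)
  have "(\<Sum>ws\<in>tuples U (Suc J). prod_list (map q ws))
      = (\<Sum>u\<in>U. q u * (\<Sum>ws\<in>tuples U J. prod_list (map q ws)))"
    by (simp add: sum_tuples_Suc sum_distrib_left)
  then show ?case using Suc assms by simp
qed (simp add: tuples_0)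

lemma sum_tuples_eta_prod_list:
  assumes "(\<Sum>u\<in>U. q u) = 1" "\<And>u. 0 \<le> q u"
  shows "(\<Sum>ws\<in>tuples U J. eta (prod_list (map q ws))) = J * (\<Sum>u\<in>U. eta (q u))"
proof (induction J)
  case 0 then show ?case by (simp add: tuples_0 eta_def)
next
  case (Suc J)
  have nonneg: "0 \<le> prod_list (map q ws)" for ws using assms(2) by (induction ws) auto
  have "(\<Sum>ws\<in>tuples U (Suc J). eta (prod_list (map q ws)))
      = (\<Sum>u\<in>U. q u * (\<Sum>ws\<in>tuples U J. eta (prod_list (map q ws)))
           + (\<Sum>ws\<in>tuples U J. prod_list (map q ws)) * eta (q u))"
    by (simp add: sum_tuples_Suc eta_mult assms nonneg sum.distrib sum_distrib_left
        sum_distrib_right)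
  also have "\<dots> = (\<Sum>u\<in>U. q u) * (J * (\<Sum>u\<in>U. eta (q u))) + (\<Sum>u\<in>U. eta (q u))"
    using Suc sum_tuples_prod_list[OF assms(1)] by (simp add: sum.distrib sum_distrib_right)
  finally show ?case using assms(1) by (simp add: algebra_simps)
qed

section \<open>I.i.d.\ streams over a finite set\<close>

locale iid_stream =
  fixes U :: "'a::countable set" and Q :: "'a pmf" and u0 :: 'a
  assumes finite_U: "finite U" and u0_in_U: "u0 \<in> U" and set_pmf_Q: "set_pmf Q \<subseteq> U"
begin

definition "M = stream_space (measure_pmf Q)"

text \<open>Streams leave \<open>U\<close> only on a null set; \<open>clip\<close> moves them into \<open>U\<close> so that pointwise
  statements about the coordinates hold everywhere.\<close>
definition clip :: "'a \<Rightarrow> 'a" where "clip u = (if u \<in> U then u else u0)"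

lemma clip_in_U: "clip u \<in> U" by (simp add: clip_def u0_in_U)

lemma prob_space_M: "prob_space M"
  unfolding M_def by (rule prob_space.prob_space_stream_space) (rule prob_space_measure_pmf)

lemma space_M: "space M = UNIV"
  by (simp add: M_def space_stream_space)

lemma sets_M: "sets M = sets (stream_space (count_space UNIV))"
  unfolding M_def by (rule sets_stream_space_cong) simp

lemma measurable_stake_fun: "(\<lambda>s. g (stake J s)) \<in> measurable M (count_space UNIV)"
proof -
  have "stake J \<in> measurable M (count_space UNIV)"
    using measurable_stake[of J] by (simp add: measurable_cong_sets[OF sets_M refl])
  then show ?thesis by (rule measurable_compose) simp
qed

lemma sets_stake: "{s. P (stake J s)} \<in> sets M"
proof -
  have "(\<lambda>s. stake J s) -` {x. P x} \<inter> space M \<in> sets M"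
    by (rule measurable_sets[OF measurable_stake_fun]) simp
  then show ?thesis by (simp add: space_M vimage_def)
qed

lemma sets_stl:
  assumes "{s. P s} \<in> sets M" shows "{s. P (stl s)} \<in> sets M"
proof -
  have "stl \<in> measurable M M" unfolding M_def by simp
  from measurable_sets[OF this assms] show ?thesis by (simp add: space_M vimage_def)
qed

lemma emeasure_shd_stl:
  assumes "{s. P s} \<in> sets M"
  shows "emeasure M {s. R (shd s) \<and> P (stl s)} = emeasure (measure_pmf Q) {t. R t} * emeasure M {s. P s}"
proof -
  have "shd \<in> measurable M (measure_pmf Q)" unfolding M_def by simp
  from measurable_sets[OF this, of "{t. R t}"] have "{s. R (shd s)} \<in> sets M"
    by (simp add: space_M vimage_def)
  then have meas: "{s. R (shd s) \<and> P (stl s)} \<in> sets M"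
    using sets_stl[OF assms] by (simp add: Collect_conj_eq)
  have "emeasure M {s. R (shd s) \<and> P (stl s)}
      = (\<integral>\<^sup>+t. emeasure M {x\<in>space M. t ## x \<in> {s. R (shd s) \<and> P (stl s)}} \<partial>measure_pmf Q)"
    unfolding M_def
    by (rule prob_space.emeasure_stream_space[OF prob_space_measure_pmf])
       (use meas in \<open>simp add: M_def\<close>)
  also have "\<dots> = (\<integral>\<^sup>+t. emeasure M {s. P s} * indicator {t. R t} t \<partial>measure_pmf Q)"
    by (intro nn_integral_cong) (auto simp: space_M split: split_indicator)
  also have "\<dots> = emeasure M {s. P s} * emeasure (measure_pmf Q) {t. R t}"
    by (subst nn_integral_cmult) auto
  finally show ?thesis by (simp add: mult.commute)
qed

lemma emeasure_stl:
  assumes "{s. P s} \<in> sets M"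
  shows "emeasure M {s. P (stl s)} = emeasure M {s. P s}"
  using emeasure_shd_stl[OF assms, of "\<lambda>_. True"] by (simp add: measure_pmf.emeasure_space_1)

lemma emeasure_clip: "emeasure (measure_pmf Q) {t. clip t = u} = (if u \<in> U then pmf Q u else 0)"
proof -
  have "emeasure (measure_pmf Q) {t. clip t = u} = emeasure (measure_pmf Q) ({t. clip t = u} \<inter> U)"
    using set_pmf_Q by (intro emeasure_eq_AE) (auto simp: AE_measure_pmf_iff)
  also have "{t. clip t = u} \<inter> U = (if u \<in> U then {u} else {})" by (auto simp: clip_def)
  finally show ?thesis by (simp add: emeasure_pmf_single)
qed

lemma measure_clip_stake:
  assumes "ws \<in> tuples U J"
  shows "measure M {s. map clip (stake J s) = ws} = prod_list (map (pmf Q) ws)"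
proof -
  interpret M: prob_space M by (rule prob_space_M)
  have nonneg: "0 \<le> prod_list (map (pmf Q) ws)" for ws by (induction ws) auto
  have "emeasure M {s. map clip (stake J s) = ws} = ennreal (prod_list (map (pmf Q) ws))"
    using assms
  proof (induction J arbitrary: ws)
    case 0 then show ?case using M.emeasure_space_1 by (simp add: tuples_def space_M)
  next
    case (Suc J)
    then obtain u ws' where ws: "ws = u # ws'" and u: "u \<in> U" and ws': "ws' \<in> tuples U J"
      by (auto simp: tuples_def length_Suc_conv)
    have "{s. map clip (stake (Suc J) s) = ws}
        = {s. clip (shd s) = u \<and> (\<lambda>x. map clip (stake J x) = ws') (stl s)}"
      by (auto simp: ws)
    then have "emeasure M {s. map clip (stake (Suc J) s) = ws}
       = emeasure (measure_pmf Q) {t. clip t = u} * emeasure M {s. map clip (stake J s) = ws'}"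
      using emeasure_shd_stl[of "\<lambda>x. map clip (stake J x) = ws'"] sets_stake by simp
    then show ?case using Suc.IH[OF ws'] u by (simp add: ws emeasure_clip ennreal_mult' nonneg)
  qed
  then show ?thesis by (simp add: M.emeasure_eq_measure nonneg)
qed

lemma distr_shd: "distr M (measure_pmf Q) shd = measure_pmf Q"
proof (rule measure_eqI)
  fix X assume "X \<in> sets (distr M (measure_pmf Q) shd)"
  have "shd \<in> measurable M (measure_pmf Q)" unfolding M_def by simp
  then have "emeasure (distr M (measure_pmf Q) shd) X = emeasure M {s. shd s \<in> X \<and> True}"
    by (simp add: emeasure_distr space_M vimage_def)
  also have "\<dots> = emeasure (measure_pmf Q) X"
    using emeasure_shd_stl[of "\<lambda>_. True" "\<lambda>t. t \<in> X"] sets.top[of M]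
      prob_space.emeasure_space_1[OF prob_space_M]
    by (simp add: space_M)
  finally show "emeasure (distr M (measure_pmf Q) shd) X = emeasure (measure_pmf Q) X" .
qed simp

lemma integral_clip_shd: "(\<integral>s. g (clip (shd s)) \<partial>M) = (\<Sum>u\<in>U. g u * pmf Q u)"
proof -
  have "shd \<in> measurable M (measure_pmf Q)" unfolding M_def by simp
  then have "(\<integral>s. g (clip (shd s)) \<partial>M) = (\<integral>t. g (clip t) \<partial>distr M (measure_pmf Q) shd)"
    by (rule integral_distr[symmetric]) simp
  also have "\<dots> = (\<integral>t. g (clip t) \<partial>measure_pmf Q)" by (simp add: distr_shd)
  also have "\<dots> = (\<Sum>u\<in>U. g (clip u) * pmf Q u)"
    using set_pmf_Q finite_U by (intro integral_measure_pmf_real) auto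
  finally show ?thesis by (simp add: clip_def)
qed

lemma integrable_clip_shd: "integrable M (\<lambda>s. (g :: 'a \<Rightarrow> real) (clip (shd s)))"
proof -
  interpret prob_space M by (rule prob_space_M)
  have "(\<lambda>s. g (clip (stake 1 s ! 0))) \<in> measurable M (count_space UNIV)"
    by (rule measurable_stake_fun)
  then have "(\<lambda>s. g (clip (shd s))) \<in> measurable M (count_space UNIV)" by simp
  then have "(\<lambda>s. g (clip (shd s))) \<in> borel_measurable M"
    by (rule measurable_compose) simp
  moreover have "\<bar>g (clip (shd s))\<bar> \<le> (\<Sum>u\<in>U. \<bar>g u\<bar>)" for s
    using finite_U clip_in_U by (intro member_le_sum) auto
  ultimately show ?thesis by (intro integrable_const_bound[where B="\<Sum>u\<in>U. \<bar>g u\<bar>"]) auto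
qed

end

section \<open>The shift space\<close>

lemma funpow_shift: "(shift ^^ r) x = (\<lambda>i. x (i + r))"
  by (induction r arbitrary: x) (auto simp: shift_def funpow_Suc_right)

lemma shift_in_shift_space: "x \<in> shift_space A \<Longrightarrow> shift x \<in> shift_space A"
  by (auto simp: shift_def shift_space_def)

lemma shift_space_shift_plus: "x \<in> shift_space A \<Longrightarrow> (\<lambda>i. x (i + k)) \<in> shift_space A"
  by (auto simp: shift_space_def)

lemma space_borelX: "space (borelX A) = shift_space A"
  by (simp add: borelX_def space_restrict_space)

lemma measurable_coordinate: "(\<lambda>x::nat \<Rightarrow> nat. x i) \<in> measurable borel borel"
proof -
  have "(\<lambda>x::nat \<Rightarrow> nat. x i) \<in> measurable (Pi\<^sub>M UNIV (\<lambda>_. borel)) borel"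
    by (rule measurable_component_singleton) simp
  then show ?thesis by (simp add: measurable_cong_sets[OF sets_PiM_equal_borel refl])
qed

lemma measurable_shift_borelX: "shift \<in> measurable (borelX A) (borelX A)"
proof -
  have "shift \<in> measurable borel (borel :: (nat \<Rightarrow> nat) measure)"
    unfolding shift_def by (rule measurable_coordinatewise_then_product) (rule measurable_coordinate)
  then show ?thesis
    unfolding borelX_def
    by (intro measurable_restrict_space2 measurable_restrict_space1)
       (auto simp: space_restrict_space shift_in_shift_space)
qed

lemma sets_coordinate_borelX: "{x \<in> shift_space A. P (x i)} \<in> sets (borelX A)"
proof -
  have "Collect P \<in> sets (borel::nat measure)" by (simp add: sets_borel_eq_count_space)
  from measurable_sets[OF measurable_coordinate this, of i]
  have "{x::nat\<Rightarrow>nat. P (x i)} \<in> sets borel" by (simp add: vimage_def)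
  then show ?thesis unfolding borelX_def sets_restrict_space
    by (intro image_eqI[where x="{x. P (x i)}"]) auto
qed

lemma sets_cyl: "cyl A w \<in> sets (borelX A)"
proof (cases "w = []")
  case True then show ?thesis
    using sets.top[of "borelX A"] by (simp add: cyl_def space_borelX)
next
  case False
  have "cyl A w = (\<Inter>i\<in>{..<length w}. {x \<in> shift_space A. x i = w ! i})"
    using False by (auto simp: cyl_def)
  also have "\<dots> \<in> sets (borelX A)"
    using False by (intro sets.finite_INT sets_coordinate_borelX) auto
  finally show ?thesis .
qed

lemma adm_words_take: "w \<in> adm_words A n \<Longrightarrow> k \<le> n \<Longrightarrow> take k w \<in> adm_words A k"
  by (auto simp: adm_words_def)

lemma loop_prefix_adm: "u @ [a] \<in> adm_words_ab A (Suc m) a a \<Longrightarrow> u \<in> adm_words A m"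
  using adm_words_take[of "u @ [a]" A "Suc m" m] by (auto simp: adm_words_ab_def adm_words_def)

lemma map_cyl: "x \<in> cyl A w \<Longrightarrow> map x [0..<length w] = w"
  unfolding cyl_def by (intro nth_equalityI) auto

lemma cyl_nonempty:
  assumes "no_zero_rows_cols A" "w \<in> adm_words A n" "n > 0"
  shows "cyl A w \<noteq> {}"
proof -
  define next_letter where "next_letter b = (SOME c. A b c)" for b
  have next_letter: "A b (next_letter b)" for b
    using assms(1) unfolding no_zero_rows_cols_def next_letter_def by (metis someI_ex)
  have w: "length w = n" "\<And>i. Suc i < n \<Longrightarrow> A (w ! i) (w ! Suc i)"
    using assms(2) by (auto simp: adm_words_def)
  define x where "x i = (if i < n then w ! i else (next_letter ^^ (i - n + 1)) (w ! (n - 1)))" for i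
  have "A (x i) (x (Suc i))" for i
  proof -
    consider "Suc i < n" | "Suc i = n" | "Suc i > n" by linarith
    then show ?thesis
    proof cases
      case 1 then show ?thesis using w by (simp add: x_def)
    next
      case 2
      then have "n - 1 = i" by simp
      then show ?thesis using 2 next_letter by (simp add: x_def)
    next
      case 3
      then have "Suc i - n + 1 = Suc (i - n + 1)" by simp
      then show ?thesis using 3 next_letter by (simp add: x_def)
    qed
  qed
  then have "x \<in> cyl A w" using w by (simp add: cyl_def shift_space_def x_def)
  then show ?thesis by blast
qed

lemma closed_shift_space: "closed (shift_space A)"
proof -
  have open_coordinate: "open {x :: nat \<Rightarrow> nat. x i = b}" for i b
  proof -
    have "open ((\<lambda>x::nat\<Rightarrow>nat. x i) -` {b})"
      using continuous_on_open_vimage[OF open_UNIV, of "\<lambda>x::nat\<Rightarrow>nat. x i"]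
        discrete_topology_class.open_discrete[of "{b}"] by simp
    then show ?thesis by (simp add: vimage_def)
  qed
  have "open {x :: nat \<Rightarrow> nat. \<not> A (x i) (x (Suc i))}" for i
  proof -
    have "{x :: nat \<Rightarrow> nat. \<not> A (x i) (x (Suc i))}
        = (\<Union>p\<in>{p. \<not> A (fst p) (snd p)}. {x. x i = fst p} \<inter> {x. x (Suc i) = snd p})"
      by auto
    then show ?thesis by (simp add: open_UN open_Int open_coordinate)
  qed
  then have "closed {x :: nat \<Rightarrow> nat. A (x i) (x (Suc i))}" for i
    by (simp add: closed_def Compl_eq)
  moreover have "shift_space A = (\<Inter>i. {x. A (x i) (x (Suc i))})" by (auto simp: shift_space_def)
  ultimately show ?thesis by (simp add: closed_INT)
qed

lemma compact_finite_letters: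
  assumes "finite B" shows "compact {x :: nat \<Rightarrow> nat. \<forall>i. x i \<in> B}"
proof -
  have "{x :: nat \<Rightarrow> nat. \<forall>i. x i \<in> B} = PiE UNIV (\<lambda>_. B)" by (auto simp: PiE_def extensional_def)
  moreover have "compactin (product_topology (\<lambda>_. euclidean) UNIV) (PiE UNIV (\<lambda>_::nat. B))"
    using assms by (subst compactin_PiE) (auto intro: finite_imp_compact)
  ultimately show ?thesis by (simp add: euclidean_product_topology)
qed

section \<open>Concatenated loops\<close>

locale loop_concat = iid_stream U Q u0
  for U :: "nat list set" and Q u0 +
  fixes m :: nat and A :: "nat \<Rightarrow> nat \<Rightarrow> bool" and a :: nat
  assumes m_pos: "m > 0"
    and loop_adm: "\<And>u. u \<in> U \<Longrightarrow> u @ [a] \<in> adm_words_ab A (Suc m) a a"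
begin

lemma length_U: "u \<in> U \<Longrightarrow> length u = m"
  using loop_adm by (auto simp: adm_words_ab_def adm_words_def)

lemma loop_edges:
  assumes "u \<in> U"
  shows "u ! 0 = a" and "Suc i < m \<Longrightarrow> A (u ! i) (u ! Suc i)" and "A (u ! (m - 1)) a"
proof -
  have adm: "Suc j < Suc m \<Longrightarrow> A ((u @ [a]) ! j) ((u @ [a]) ! Suc j)" for j
    using loop_adm[OF assms] by (auto simp: adm_words_ab_def adm_words_def)
  show "u ! 0 = a"
    using loop_adm[OF assms] length_U[OF assms] m_pos by (simp add: adm_words_ab_def nth_append)
  show "Suc i < m \<Longrightarrow> A (u ! i) (u ! Suc i)"
    using adm[of i] length_U[OF assms] by (simp add: nth_append)
  show "A (u ! (m - 1)) a"
    using adm[of "m - 1"] length_U[OF assms] m_pos by (simp add: nth_append)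
qed

definition loop_seq :: "nat list stream \<Rightarrow> nat \<Rightarrow> nat" where
  "loop_seq s i = clip (s !! (i div m)) ! (i mod m)"

lemma loop_seq_in_shift_space: "(shift ^^ r) (loop_seq s) \<in> shift_space A"
proof -
  have "A (loop_seq s i) (loop_seq s (Suc i))" for i
  proof (cases "Suc (i mod m) = m")
    case True
    then have "Suc i mod m = 0" "Suc i div m = Suc (i div m)" "i mod m = m - 1"
      by (auto simp: mod_Suc div_Suc)
    then show ?thesis unfolding loop_seq_def using loop_edges clip_in_U by simp
  next
    case False
    then have "Suc i mod m = Suc (i mod m)" "Suc i div m = i div m" "Suc (i mod m) < m"
      using m_pos mod_less_divisor[OF m_pos, of i] by (auto simp: mod_Suc div_Suc)
    then show ?thesis unfolding loop_seq_def using loop_edges(2) clip_in_U by simp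
  qed
  then show ?thesis by (simp add: shift_space_def funpow_shift)
qed

lemma loop_seq_stl: "(shift ^^ m) (loop_seq s) = loop_seq (stl s)"
proof
  fix i
  have "(i + m) div m = Suc (i div m)" "(i + m) mod m = i mod m" using m_pos by auto
  then show "(shift ^^ m) (loop_seq s) i = loop_seq (stl s) i" by (simp add: funpow_shift loop_seq_def)
qed

lemma loop_seq_in_cyl: "loop_seq s \<in> cyl A (clip (shd s) @ [a])"
proof -
  let ?u = "clip (shd s)"
  have "loop_seq s i = (?u @ [a]) ! i" if "i < Suc m" for i
  proof (cases "i < m")
    case True then show ?thesis using length_U[OF clip_in_U] by (simp add: loop_seq_def nth_append)
  next
    case False
    then have "i = m" using that by simp
    then show ?thesis
      using length_U[OF clip_in_U] loop_edges(1)[OF clip_in_U] m_pos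
      by (simp add: loop_seq_def nth_append)
  qed
  then show ?thesis
    using loop_seq_in_shift_space[of 0] length_U[OF clip_in_U] by (simp add: cyl_def)
qed

lemma measurable_loop_seq: "(\<lambda>s. (shift ^^ r) (loop_seq s)) \<in> measurable M (borelX A)"
proof -
  have "(\<lambda>s. loop_seq s i) \<in> measurable M (count_space UNIV)" for i
  proof -
    have "(\<lambda>s. loop_seq s i) = (\<lambda>s. clip (stake (Suc (i div m)) s ! (i div m)) ! (i mod m))"
      unfolding loop_seq_def by (subst stake_nth) auto
    then show ?thesis by (simp only: measurable_stake_fun[of "\<lambda>l. clip (l ! (i div m)) ! (i mod m)"])
  qed
  then have "(\<lambda>s. (shift ^^ r) (loop_seq s)) \<in> measurable M borel"
    by (intro measurable_coordinatewise_then_product)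
       (simp add: funpow_shift measurable_cong_sets[OF refl sets_borel_eq_count_space])
  then show ?thesis
    unfolding borelX_def by (simp add: measurable_restrict_space2_iff loop_seq_in_shift_space)
qed

definition "phase = measure_pmf (pmf_of_set {..<m})"

text \<open>The law of the concatenation, averaged over its \<open>m\<close> phases so as to become invariant.\<close>
definition "mu = distr (phase \<Otimes>\<^sub>M M) (borelX A) (\<lambda>(r, s). (shift ^^ r) (loop_seq s))"

lemma measurable_phase_loop_seq:
  "(\<lambda>(r, s). (shift ^^ r) (loop_seq s)) \<in> measurable (phase \<Otimes>\<^sub>M M) (borelX A)"
proof -
  have "(\<lambda>x. (shift ^^ fst x) (loop_seq (snd x))) \<in> measurable (phase \<Otimes>\<^sub>M M) (borelX A)"
  proof (rule measurable_compose_countable[where f="\<lambda>r x. (shift ^^ r) (loop_seq (snd x))"])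
    fix r :: nat show "(\<lambda>x. (shift ^^ r) (loop_seq (snd x))) \<in> measurable (phase \<Otimes>\<^sub>M M) (borelX A)"
      using measurable_loop_seq by (rule measurable_compose[OF measurable_snd])
  next
    show "fst \<in> measurable (phase \<Otimes>\<^sub>M M) (count_space UNIV)"
      using measurable_fst[of phase M]
      by (simp add: measurable_cong_sets[OF refl] phase_def)
  qed
  then show ?thesis by (simp add: case_prod_beta')
qed

lemma prob_space_mu: "prob_space mu"
  unfolding mu_def phase_def using prob_space_M measurable_phase_loop_seq
  by (intro prob_space.prob_space_distr prob_space_pair) (auto simp: phase_def prob_space_measure_pmf)

lemma sets_mu: "sets mu = sets (borelX A)" by (simp add: mu_def)

lemma space_mu: "space mu = shift_space A" by (simp add: mu_def space_borelX)

lemma emeasure_mu: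
  assumes "B \<in> sets (borelX A)"
  shows "emeasure mu B = (\<Sum>r<m. emeasure M {s. (shift ^^ r) (loop_seq s) \<in> B}) / m"
proof -
  interpret M: prob_space M by (rule prob_space_M)
  let ?f = "\<lambda>(r, s). (shift ^^ r) (loop_seq s)"
  let ?C = "?f -` B \<inter> space (phase \<Otimes>\<^sub>M M)"
  have "emeasure mu B = emeasure (phase \<Otimes>\<^sub>M M) ?C"
    unfolding mu_def using assms measurable_phase_loop_seq by (simp add: emeasure_distr)
  also have "\<dots> = (\<integral>\<^sup>+ p. indicator ?C p \<partial>(phase \<Otimes>\<^sub>M M))"
    using assms measurable_phase_loop_seq by (simp add: measurable_sets)
  also have "\<dots> = (\<integral>\<^sup>+ r. \<integral>\<^sup>+ s. indicator ?C (r, s) \<partial>M \<partial>phase)"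
    by (rule M.nn_integral_fst[symmetric])
       (use assms measurable_phase_loop_seq in \<open>simp add: measurable_sets\<close>)
  also have "\<dots> = (\<integral>\<^sup>+ r. emeasure M {s. (shift ^^ r) (loop_seq s) \<in> B} \<partial>phase)"
  proof (intro nn_integral_cong)
    fix r
    have "(\<lambda>s. indicator ?C (r, s)) = (indicator {s. (shift ^^ r) (loop_seq s) \<in> B} :: _ \<Rightarrow> ennreal)"
      by (auto simp: space_pair_measure space_M phase_def split: split_indicator)
    moreover have "{s. (shift ^^ r) (loop_seq s) \<in> B} \<in> sets M"
      using measurable_sets[OF measurable_loop_seq assms] by (simp add: space_M vimage_def)
    ultimately show "(\<integral>\<^sup>+ s. indicator ?C (r, s) \<partial>M) = emeasure M {s. (shift ^^ r) (loop_seq s) \<in> B}"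
      by simp
  qed
  also have "\<dots> = (\<Sum>r<m. emeasure M {s. (shift ^^ r) (loop_seq s) \<in> B}) / m"
    unfolding phase_def using m_pos by (subst nn_integral_pmf_of_set) auto
  finally show ?thesis .
qed

lemma mu_shift_invariant: "shift_invariant A mu"
  unfolding shift_invariant_def prob_on_X_def
proof (intro conjI ballI prob_space_mu sets_mu)
  interpret M: prob_space M by (rule prob_space_M)
  fix B assume "B \<in> sets mu"
  then have B: "B \<in> sets (borelX A)" by (simp add: sets_mu)
  define f where "f r = emeasure M {s. (shift ^^ r) (loop_seq s) \<in> B}" for r
  have "{s. loop_seq s \<in> B} \<in> sets M"
    using measurable_sets[OF measurable_loop_seq B, of 0] by (simp add: space_M vimage_def)
  then have fm: "f m = f 0"
    unfolding f_def by (simp add: loop_seq_stl emeasure_stl[of "\<lambda>s. loop_seq s \<in> B"])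
  have "f 0 + (\<Sum>r<m. f (Suc r)) = (\<Sum>r<Suc m. f r)" by (rule sum.lessThan_Suc_shift[symmetric])
  also have "\<dots> = f 0 + (\<Sum>r<m. f r)" by (simp add: fm add.commute)
  finally have shifted: "(\<Sum>r<m. f (Suc r)) = (\<Sum>r<m. f r)"
    by (simp add: f_def ennreal_add_left_cancel)
  have "shift -` B \<inter> shift_space A \<in> sets (borelX A)"
    using measurable_sets[OF measurable_shift_borelX B] by (simp add: space_borelX)
  then have "emeasure mu (shift -` B \<inter> shift_space A) = (\<Sum>r<m. f (Suc r)) / m"
    unfolding f_def by (simp add: emeasure_mu loop_seq_in_shift_space)
  also have "\<dots> = emeasure mu B" using emeasure_mu[OF B] shifted by (simp add: f_def)
  finally show "emeasure mu (shift -` B \<inter> shift_space A) = emeasure mu B" .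
qed


definition "letters = \<Union> (set ` U)"
definition "K = {x \<in> shift_space A. \<forall>i. x i \<in> letters}"

lemma finite_letters: "finite letters"
  using finite_U by (simp add: letters_def)

lemma compact_K: "compact K"
proof -
  have "K = shift_space A \<inter> {x. \<forall>i. x i \<in> letters}" by (auto simp: K_def)
  then show ?thesis
    using compact_finite_letters[OF finite_letters] closed_shift_space by (simp add: closed_Int_compact)
qed

lemma loop_seq_in_K: "(shift ^^ r) (loop_seq s) \<in> K"
proof -
  have "loop_seq s i \<in> letters" for i
    unfolding loop_seq_def letters_def using clip_in_U length_U[OF clip_in_U] m_pos
    by (auto intro!: bexI[of _ "clip (s !! (i div m))"])
  then show ?thesis using loop_seq_in_shift_space by (simp add: K_def funpow_shift)
qed

lemma sets_K: "K \<in> sets (borelX A)"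
proof -
  have "K = (\<Inter>i. {x \<in> shift_space A. x i \<in> letters})" by (auto simp: K_def)
  also have "\<dots> \<in> sets (borelX A)" 
    using sets_coordinate_borelX[of A "\<lambda>b. b \<in> letters"] by (intro sets.countable_INT) auto
  finally show ?thesis .
qed

lemma emeasure_mu_K: "emeasure mu K = 1"
proof -
  interpret M: prob_space M by (rule prob_space_M)
  have "emeasure mu K = (\<Sum>r<m. emeasure M UNIV) / m"
    by (simp add: emeasure_mu[OF sets_K] loop_seq_in_K)
  also have "\<dots> = of_nat m / of_nat m" using M.emeasure_space_1 by (simp add: space_M)
  also have "\<dots> = 1" using m_pos by (intro ennreal_divide_self) (auto simp: of_nat_less_top)
  finally show ?thesis .
qed

lemma birkhoff_loop_seq: "birkhoff m f (loop_seq s) = (\<Sum>r<m. f ((shift ^^ r) (loop_seq s)))"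
  by (simp add: birkhoff_def)

lemma integrable_loop_point:
  fixes f :: "(nat \<Rightarrow> nat) \<Rightarrow> real"
  assumes f: "f \<in> borel_measurable (borelX A)" and bound: "\<And>x. x \<in> K \<Longrightarrow> \<bar>f x\<bar> \<le> B"
  shows "integrable M (\<lambda>s. f ((shift ^^ r) (loop_seq s)))"
proof -
  interpret prob_space M by (rule prob_space_M)
  show ?thesis using bound loop_seq_in_K measurable_comp[OF measurable_loop_seq f]
    by (intro integrable_const_bound[where B=B]) (auto simp: comp_def)
qed

lemma integral_mu:
  fixes f :: "(nat \<Rightarrow> nat) \<Rightarrow> real"
  assumes f: "f \<in> borel_measurable (borelX A)" and bound: "\<And>x. x \<in> K \<Longrightarrow> \<bar>f x\<bar> \<le> B"
  shows "integrable mu f" "integral\<^sup>L mu f = (\<integral>s. birkhoff m f (loop_seq s) \<partial>M) / m"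
proof -
  interpret mu: prob_space mu by (rule prob_space_mu)
  interpret M: prob_space M by (rule prob_space_M)
  interpret phase: prob_space phase by (simp add: phase_def prob_space_measure_pmf)
  interpret pair_sigma_finite phase M ..
  let ?f = "\<lambda>(r, s). (shift ^^ r) (loop_seq s)"
  have "AE x in mu. x \<in> K"
    using emeasure_mu_K by (intro mu.AE_prob_1) (simp add: mu.emeasure_eq_measure)
  then show int: "integrable mu f"
    using bound f by (intro mu.integrable_const_bound[where B=B])
      (auto elim!: eventually_mono simp: measurable_cong_sets[OF sets_mu refl])
  have "integral\<^sup>L mu f = (\<integral>p. f (?f p) \<partial>(phase \<Otimes>\<^sub>M M))"
    unfolding mu_def by (rule integral_distr[OF measurable_phase_loop_seq f])
  also have "\<dots> = (\<integral>r. (\<integral>s. f ((shift ^^ r) (loop_seq s)) \<partial>M) \<partial>phase)"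
    using integral_fst'[of "\<lambda>p. f (?f p)"] int
    unfolding mu_def by (simp add: integrable_distr_eq[OF measurable_phase_loop_seq f])
  also have "\<dots> = (\<Sum>r<m. (\<integral>s. f ((shift ^^ r) (loop_seq s)) \<partial>M)) / m"
    unfolding phase_def using m_pos by (subst integral_pmf_of_set) auto
  also have "(\<Sum>r<m. (\<integral>s. f ((shift ^^ r) (loop_seq s)) \<partial>M)) = (\<integral>s. birkhoff m f (loop_seq s) \<partial>M)"
    using integrable_loop_point[OF f bound] by (simp add: birkhoff_loop_seq)
  finally show "integral\<^sup>L mu f = (\<integral>s. birkhoff m f (loop_seq s) \<partial>M) / m" .
qed

subsection \<open>Entropy of the loop measure\<close>

text \<open>The partition of \<open>X\<close> by the first letter, with all letters outside the support of \<open>mu\<close>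
  lumped together into a single cell so that the partition is finite.\<close>
definition "fresh = (SOME b. b \<notin> letters)"
definition "code b = (if b \<in> letters then b else fresh)"
definition "codes = insert fresh letters"
definition "letter_cell b = {x \<in> shift_space A. code (x 0) = b}"
definition "first_letter_partition = letter_cell ` codes"
definition "code_cyl t = {x \<in> shift_space A. \<forall>i<length t. code (x i) = t ! i}"

lemma finite_codes: "finite codes" by (simp add: codes_def finite_letters)

lemma sets_code_cyl: "code_cyl t \<in> sets (borelX A)"
proof (cases "t = []")
  case True then show ?thesis
    using sets.top[of "borelX A"] by (simp add: code_cyl_def space_borelX)
next
  case False
  have "code_cyl t = (\<Inter>i\<in>{..<length t}. {x \<in> shift_space A. code (x i) = t ! i})"
    using False by (auto simp: code_cyl_def)
  also have "\<dots> \<in> sets (borelX A)"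
    using False by (intro sets.finite_INT) (auto intro: sets_coordinate_borelX)
  finally show ?thesis .
qed

lemma fin_partition_first_letter: "fin_partition mu first_letter_partition"
  unfolding fin_partition_def
proof (intro conjI ballI impI)
  show "finite first_letter_partition" by (simp add: first_letter_partition_def finite_codes)
  show "first_letter_partition \<subseteq> sets mu"
    by (auto simp: first_letter_partition_def letter_cell_def sets_mu intro: sets_coordinate_borelX)
  show "\<Union> first_letter_partition = space mu"
    by (auto simp: first_letter_partition_def letter_cell_def space_mu codes_def code_def)
qed (auto simp: first_letter_partition_def letter_cell_def)

lemma join_first_letter_partition:
  "join_iter mu first_letter_partition N = code_cyl ` tuples codes N"
proof (intro equalityI subsetI)
  fix c assume "c \<in> join_iter mu first_letter_partition N"
  then obtain p where c: "c = space mu \<inter> (\<Inter>i<N. (shift ^^ i) -` p i)"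
    and p: "\<forall>i<N. p i \<in> first_letter_partition"
    unfolding join_iter_def by blast
  from p have "\<forall>i<N. \<exists>b\<in>codes. p i = letter_cell b"
    by (auto simp: first_letter_partition_def)
  then obtain b where b: "\<And>i. i < N \<Longrightarrow> b i \<in> codes \<and> p i = letter_cell (b i)"
    by metis
  have "c = code_cyl (map b [0..<N])"
    unfolding c code_cyl_def space_mu using b
    by (auto simp: letter_cell_def shift_space_shift_plus funpow_shift)
  moreover have "map b [0..<N] \<in> tuples codes N" using b by (auto simp: tuples_def)
  ultimately show "c \<in> code_cyl ` tuples codes N" by blast
next
  fix c assume "c \<in> code_cyl ` tuples codes N"
  then obtain t where t: "t \<in> tuples codes N" and c: "c = code_cyl t" by blast
  define p where "p i = letter_cell (t ! i)" for i
  have "\<forall>i<N. p i \<in> first_letter_partition"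
    using t nth_mem by (fastforce simp: p_def first_letter_partition_def tuples_def)
  moreover have "c = space mu \<inter> (\<Inter>i<N. (shift ^^ i) -` p i)"
    unfolding c code_cyl_def space_mu p_def using t
    by (auto simp: letter_cell_def shift_space_shift_plus funpow_shift tuples_def)
  ultimately show "c \<in> join_iter mu first_letter_partition N" unfolding join_iter_def by blast
qed

lemma part_entropy_join:
  "part_entropy mu (join_iter mu first_letter_partition N)
    = (\<Sum>t\<in>tuples codes N. eta (measure mu (code_cyl t)))"
proof -
  have "(\<Sum>c\<in>code_cyl ` tuples codes N. eta (measure mu c))
      = (\<Sum>t\<in>tuples codes N. eta (measure mu (code_cyl t)))"
  proof (subst sum.reindex_nontrivial)
    fix x y assume xy: "x \<in> tuples codes N" "y \<in> tuples codes N" "x \<noteq> y" "code_cyl x = code_cyl y"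
    then obtain i where i: "i < N" "x ! i \<noteq> y ! i"
      unfolding tuples_def by (metis (mono_tags, lifting) mem_Collect_eq nth_equalityI)
    have "code_cyl x = {}"
    proof (intro equalityI subsetI)
      fix z assume z: "z \<in> code_cyl x"
      then have "z \<in> code_cyl y" using xy by simp
      then have "code (z i) = x ! i" "code (z i) = y ! i"
        using z i xy by (auto simp: code_cyl_def tuples_def)
      then show "z \<in> {}" using i by simp
    qed simp
    then show "eta (measure mu (code_cyl x)) = 0" by (simp add: eta_def)
  qed (simp_all add: finite_tuples finite_codes)
  then show ?thesis
    by (simp add: join_first_letter_partition part_entropy_def eta_def)
qed

definition "window r N s = map ((shift ^^ r) (loop_seq s)) [0..<N]"
definition "entropy_Q = (\<Sum>u\<in>U. eta (pmf Q u))"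

lemma sum_pmf_Q: "(\<Sum>u\<in>U. pmf Q u) = 1" using finite_U set_pmf_Q by (rule sum_pmf_eq_1)

lemma entropy_Q_nonneg: "0 \<le> entropy_Q"
  unfolding entropy_Q_def by (intro sum_nonneg eta_nonneg) (auto simp: pmf_le_1)

lemma code_cyl_preimage:
  "length t = N \<Longrightarrow> {s. (shift ^^ r) (loop_seq s) \<in> code_cyl t} = {s. window r N s = t}"
  using loop_seq_in_shift_space loop_seq_in_K
  by (auto simp: code_cyl_def K_def code_def window_def list_eq_iff_nth_eq)

lemma sets_window: "{s. window r N s = t} \<in> sets M"
proof (cases "length t = N")
  case True
  have "{s. (shift ^^ r) (loop_seq s) \<in> code_cyl t} \<in> sets M"
    using measurable_sets[OF measurable_loop_seq sets_code_cyl] by (simp add: space_M vimage_def)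
  then show ?thesis using code_cyl_preimage[OF True] by simp
next
  case False then have "{s. window r N s = t} = {}" by (auto simp: window_def)
  then show ?thesis by simp
qed

lemma window_in_tuples: "window r N s \<in> tuples codes N"
  using loop_seq_in_K by (auto simp: window_def tuples_def codes_def K_def)

lemma measure_code_cyl:
  assumes "t \<in> tuples codes N"
  shows "measure mu (code_cyl t) = (\<Sum>r<m. measure M {s. window r N s = t}) / m"
proof -
  interpret M: prob_space M by (rule prob_space_M)
  have "emeasure mu (code_cyl t) = (\<Sum>r<m. emeasure M {s. window r N s = t}) / m"
    using emeasure_mu[OF sets_code_cyl] code_cyl_preimage assms by (simp add: tuples_def)
  also have "\<dots> = ennreal (\<Sum>r<m. measure M {s. window r N s = t}) / ennreal (real m)"
    by (simp add: M.emeasure_eq_measure ennreal_of_nat_eq_real_of_nat)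
  also have "\<dots> = ennreal ((\<Sum>r<m. measure M {s. window r N s = t}) / m)"
    using m_pos by (intro divide_ennreal) (auto intro: sum_nonneg)
  finally show ?thesis by (simp add: measure_def sum_nonneg)
qed


text \<open>A window of length \<open>N\<close> is determined by the first \<open>N div m + 2\<close> loops, and it determines
  the \<open>N div m - 1\<close> loops lying entirely inside it; this sandwiches its entropy.\<close>
lemma window_entropy_le:
  assumes "r < m"
  shows "(\<Sum>t\<in>tuples codes N. eta (measure M {s. window r N s = t})) \<le> real (N div m + 2) * entropy_Q"
proof -
  define J where "J = N div m + 2"
  define g where "g ws = map (\<lambda>i. ws ! ((i + r) div m) ! ((i + r) mod m)) [0..<N]" for ws :: "nat list list"
  have idx: "(i + r) div m < J" if "i < N" for i
  proof -
    have "N div m * m + N mod m = N" "N mod m < m" "J * m = N div m * m + 2 * m"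
      using m_pos by (simp_all add: J_def algebra_simps)
    then have "i + r < J * m" using assms that by linarith
    then show ?thesis using m_pos by (simp add: div_less_iff_less_mult)
  qed
  have "(\<Sum>t\<in>tuples codes N. eta (measure M {s\<in>space M. window r N s = t}))
      \<le> (\<Sum>ws\<in>tuples U J. eta (measure M {s\<in>space M. map clip (stake J s) = ws}))"
  proof (rule entropy_of_function_le[where g=g])
    show "prob_space M" by (rule prob_space_M)
    show "finite (tuples U J)" "finite (tuples codes N)"
      by (simp_all add: finite_tuples finite_U finite_codes)
    show "map clip (stake J s) \<in> tuples U J" for s using clip_in_U by (auto simp: tuples_def)
    show "{s \<in> space M. map clip (stake J s) = x} \<in> sets M" for x
      using sets_stake by (simp add: space_M)
    show "window r N s = g (map clip (stake J s))" for s
      using idx by (auto simp: window_def g_def funpow_shift loop_seq_def)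
  qed
  also have "\<dots> = (\<Sum>ws\<in>tuples U J. eta (prod_list (map (pmf Q) ws)))"
    by (intro sum.cong refl) (simp add: space_M measure_clip_stake)
  also have "\<dots> = J * entropy_Q"
    unfolding entropy_Q_def using sum_pmf_Q by (intro sum_tuples_eta_prod_list) auto
  finally show ?thesis by (simp add: space_M J_def)
qed

lemma window_nth_loop:
  assumes "r < m" "Suc j < N div m" "i < m"
  shows "window r N s ! (Suc j * m + i - r) = clip (s !! Suc j) ! i"
proof -
  have "Suc (Suc j) * m \<le> N div m * m" using assms(2) by (intro mult_right_mono) auto
  also have "\<dots> \<le> N" by simp
  finally have "Suc j * m + i - r < N" using assms(3) by simp
  moreover have "(Suc j * m + i) div m = Suc j" "(Suc j * m + i) mod m = i"
    using assms(3) m_pos div_mult_self2[of m i "Suc j"] mod_mult_self2[of i m "Suc j"]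
    by (simp_all add: add.commute mult.commute)
  ultimately show ?thesis using assms(1) by (simp add: window_def funpow_shift loop_seq_def)
qed

lemma window_entropy_ge:
  assumes "r < m"
  shows "real (N div m - 1) * entropy_Q \<le> (\<Sum>t\<in>tuples codes N. eta (measure M {s. window r N s = t}))"
proof -
  define L where "L = N div m - 1"
  define g where "g t = map (\<lambda>j. map (\<lambda>i. t ! (Suc j * m + i - r)) [0..<m]) [0..<L]" for t :: "nat list"
  have "real L * entropy_Q = (\<Sum>vs\<in>tuples U L. eta (prod_list (map (pmf Q) vs)))"
    unfolding entropy_Q_def using sum_pmf_Q by (intro sum_tuples_eta_prod_list[symmetric]) auto
  also have "\<dots> = (\<Sum>vs\<in>tuples U L. eta (measure M {s\<in>space M. map clip (stake L (stl s)) = vs}))"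
  proof (intro sum.cong refl arg_cong[where f=eta])
    fix vs assume vs: "vs \<in> tuples U L"
    have "emeasure M {s. (\<lambda>s. map clip (stake L s) = vs) (stl s)} = emeasure M {s. map clip (stake L s) = vs}"
      by (rule emeasure_stl) (rule sets_stake)
    then show "prod_list (map (pmf Q) vs) = measure M {s\<in>space M. map clip (stake L (stl s)) = vs}"
      using measure_clip_stake[OF vs] by (simp add: space_M measure_def)
  qed
  also have "\<dots> \<le> (\<Sum>t\<in>tuples codes N. eta (measure M {s\<in>space M. window r N s = t}))"
  proof (rule entropy_of_function_le[where g=g])
    show "prob_space M" by (rule prob_space_M)
    show "finite (tuples U L)" "finite (tuples codes N)"
      by (simp_all add: finite_tuples finite_U finite_codes)
    show "window r N s \<in> tuples codes N" for s by (rule window_in_tuples)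
    show "{s \<in> space M. window r N s = x} \<in> sets M" for x using sets_window by (simp add: space_M)
    fix s
    show "map clip (stake L (stl s)) = g (window r N s)"
    proof (rule nth_equalityI)
      fix j assume "j < length (map clip (stake L (stl s)))"
      then have j: "j < L" by simp
      have "Suc j < N div m" using j unfolding L_def by simp
      then have "map (\<lambda>i. window r N s ! (Suc j * m + i - r)) [0..<m] = clip (s !! Suc j)"
        using window_nth_loop[OF assms] length_U[OF clip_in_U] by (simp add: list_eq_iff_nth_eq)
      then show "map clip (stake L (stl s)) ! j = g (window r N s) ! j" using j by (simp add: g_def)
    qed (simp add: g_def)
  qed
  finally show ?thesis by (simp add: space_M L_def)
qed

definition "join_entropy N = part_entropy mu (join_iter mu first_letter_partition N)"

lemma join_entropy_eq:
  "join_entropy N = (\<Sum>t\<in>tuples codes N. eta ((\<Sum>r<m. measure M {s. window r N s = t}) / card {..<m}))"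
  unfolding join_entropy_def part_entropy_join by (intro sum.cong refl) (simp add: measure_code_cyl)

lemma join_entropy_ge: "(real (N div m) - 1) * entropy_Q \<le> join_entropy N"
proof -
  have "(real (N div m) - 1) * entropy_Q \<le> real (N div m - 1) * entropy_Q"
    using entropy_Q_nonneg by (intro mult_right_mono) auto
  also have "\<dots> = (\<Sum>r<m. real (N div m - 1) * entropy_Q) / card {..<m}" using m_pos by simp
  also have "\<dots> \<le> (\<Sum>r<m. \<Sum>t\<in>tuples codes N. eta (measure M {s. window r N s = t})) / card {..<m}"
    by (intro divide_right_mono sum_mono window_entropy_ge) auto
  also have "\<dots> = (\<Sum>t\<in>tuples codes N. (\<Sum>r<m. eta (measure M {s. window r N s = t})) / card {..<m})"
    by (simp add: sum.swap[of _ "{..<m}"] sum_divide_distrib)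
  also have "\<dots> \<le> join_entropy N"
    unfolding join_entropy_eq using m_pos by (intro sum_mono mean_eta_le_eta_mean) auto
  finally show ?thesis .
qed

lemma join_entropy_le: "join_entropy N \<le> (real (N div m) + 2) * entropy_Q + ln m"
proof -
  have "join_entropy N \<le> (\<Sum>t\<in>tuples codes N. (\<Sum>r<m. eta (measure M {s. window r N s = t})) / card {..<m}
      + ln (card {..<m}) * (\<Sum>r<m. measure M {s. window r N s = t}) / card {..<m})"
    unfolding join_entropy_eq using m_pos by (intro sum_mono eta_mean_le_mean_eta) auto
  also have "\<dots> = (\<Sum>r<m. \<Sum>t\<in>tuples codes N. eta (measure M {s. window r N s = t})) / m
      + ln m * (\<Sum>r<m. \<Sum>t\<in>tuples codes N. measure M {s. window r N s = t}) / m"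
    by (simp add: sum.distrib sum.swap[of _ "{..<m}"] sum_divide_distrib sum_distrib_left)
  also have "\<dots> \<le> (\<Sum>r<m. real (N div m + 2) * entropy_Q) / m + ln m * (\<Sum>r<m. 1) / m"
  proof (intro add_mono divide_right_mono mult_left_mono sum_mono window_entropy_le)
    fix r assume "r \<in> {..<m}"
    show "(\<Sum>t\<in>tuples codes N. measure M {s. window r N s = t}) \<le> 1"
      using sum_measure_fibres_le_1[OF prob_space_M, of "tuples codes N" "window r N"]
      by (simp add: space_M finite_tuples finite_codes sets_window)
  qed (use m_pos in auto)
  also have "\<dots> = (real (N div m) + 2) * entropy_Q + ln m" using m_pos by simp
  finally show ?thesis .
qed

lemma join_entropy_limit: "(\<lambda>n. join_entropy (Suc n) / Suc n) \<longlonglongrightarrow> entropy_Q / m"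
proof (rule tendsto_sandwich)
  have m: "real m > 0" using m_pos by simp
  have div_bounds: "real N / m - 1 \<le> real (N div m)" "real (N div m) \<le> real N / m" for N
  proof -
    have "real N = real (N div m) * m + real (N mod m)"
      by (metis div_mult_mod_eq of_nat_add of_nat_mult)
    then show "real N / m - 1 \<le> real (N div m)" "real (N div m) \<le> real N / m"
      using m mod_less_divisor[OF m_pos, of N] by (auto simp: field_simps)
  qed
  show "\<forall>\<^sub>F n in sequentially. entropy_Q / m - 2 * entropy_Q / real (Suc n) \<le> join_entropy (Suc n) / real (Suc n)"
  proof (intro always_eventually allI)
    fix n
    have "(real (Suc n) / m - 2) * entropy_Q \<le> (real (Suc n div m) - 1) * entropy_Q"
      using div_bounds(1)[of "Suc n"] entropy_Q_nonneg by (intro mult_right_mono) auto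
    also have "\<dots> \<le> join_entropy (Suc n)" by (rule join_entropy_ge)
    finally have "(real (Suc n) / m - 2) * entropy_Q / real (Suc n) \<le> join_entropy (Suc n) / real (Suc n)"
      by (intro divide_right_mono) auto
    then show "entropy_Q / m - 2 * entropy_Q / real (Suc n) \<le> join_entropy (Suc n) / real (Suc n)"
      using m by (simp add: field_simps)
  qed
  show "\<forall>\<^sub>F n in sequentially. join_entropy (Suc n) / real (Suc n) \<le> entropy_Q / m + (2 * entropy_Q + ln m) / real (Suc n)"
  proof (intro always_eventually allI)
    fix n
    have "join_entropy (Suc n) \<le> (real (Suc n div m) + 2) * entropy_Q + ln m" by (rule join_entropy_le)
    also have "\<dots> \<le> (real (Suc n) / m + 2) * entropy_Q + ln m"
      using div_bounds(2)[of "Suc n"] entropy_Q_nonneg by (intro add_mono mult_right_mono) auto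
    finally have "join_entropy (Suc n) / real (Suc n) \<le> ((real (Suc n) / m + 2) * entropy_Q + ln m) / real (Suc n)"
      by (intro divide_right_mono) auto
    then show "join_entropy (Suc n) / real (Suc n) \<le> entropy_Q / m + (2 * entropy_Q + ln m) / real (Suc n)"
      using m by (simp add: field_simps)
  qed
  have vanish: "(\<lambda>n. c / real (Suc n)) \<longlonglongrightarrow> 0" for c :: real
    using LIMSEQ_Suc[OF lim_const_over_n[of c]] by simp
  show "(\<lambda>n. entropy_Q / m - 2 * entropy_Q / real (Suc n)) \<longlonglongrightarrow> entropy_Q / m"
    using tendsto_diff[OF tendsto_const vanish[of "2 * entropy_Q"]] by simp
  show "(\<lambda>n. entropy_Q / m + (2 * entropy_Q + ln m) / real (Suc n)) \<longlonglongrightarrow> entropy_Q / m"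
    using tendsto_add[OF tendsto_const vanish[of "2 * entropy_Q + ln m"]] by simp
qed

lemma ks_entropy_mu_ge: "ereal (entropy_Q / m) \<le> ks_entropy mu"
proof -
  have "ks_entropy_part mu first_letter_partition = entropy_Q / m"
    unfolding ks_entropy_part_def using join_entropy_limit by (simp add: join_entropy_def limI)
  then show ?thesis unfolding ks_entropy_def using fin_partition_first_letter
    by (intro SUP_upper2[of first_letter_partition]) auto
qed

end

lemma invariant_measure_from_loops:
  fixes q :: "nat list \<Rightarrow> real"
  assumes "finite U" "U \<noteq> {}" "m > 0"
    and loops: "(\<lambda>u. u @ [a]) ` U \<subseteq> adm_words_ab A (Suc m) a a"
    and q: "\<And>u. u \<in> U \<Longrightarrow> 0 \<le> q u" "(\<Sum>u\<in>U. q u) = 1"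
  obtains \<mu> K where "shift_invariant A \<mu>" "compact K" "K \<subseteq> shift_space A" "emeasure \<mu> K = 1"
    "K \<subseteq> {x. \<forall>i. x i \<in> \<Union> (set ` U)}"
    "ereal ((\<Sum>u\<in>U. eta (q u)) / m) \<le> ks_entropy \<mu>"
    "\<And>f g. f \<in> borel_measurable (borelX A) \<Longrightarrow> bounded (f ` K) \<Longrightarrow>
       (\<And>u x. u \<in> U \<Longrightarrow> x \<in> cyl A (u @ [a]) \<Longrightarrow> g u \<le> birkhoff m f x) \<Longrightarrow>
       integrable \<mu> f \<and> (\<Sum>u\<in>U. q u * g u) \<le> m * integral\<^sup>L \<mu> f"
proof -
  define qU where "qU u = (if u \<in> U then q u else 0)" for u
  have qU_nonneg: "0 \<le> qU u" for u using q by (simp add: qU_def)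
  have "(\<integral>\<^sup>+u. ennreal (qU u) \<partial>count_space UNIV) = (\<Sum>u\<in>U. ennreal (qU u))"
    using assms(1) by (intro nn_integral_count_space') (auto simp: qU_def)
  also have "\<dots> = ennreal (\<Sum>u\<in>U. q u)" using q by (simp add: qU_def sum_ennreal)
  also have "\<dots> = 1" using q by simp
  finally have pmf_Q: "pmf (embed_pmf qU) u = qU u" for u by (rule pmf_embed_pmf[OF qU_nonneg])
  obtain u0 where "u0 \<in> U" using assms(2) by blast
  then interpret loop_concat U "embed_pmf qU" u0 m A a
    using assms by unfold_locales (auto simp: set_pmf_eq pmf_Q qU_def image_subset_iff)
  show ?thesis
  proof (rule that[of mu K])
    show "ereal ((\<Sum>u\<in>U. eta (q u)) / m) \<le> ks_entropy mu"
      using ks_entropy_mu_ge by (simp add: entropy_Q_def pmf_Q qU_def)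
    fix f g assume f: "f \<in> borel_measurable (borelX A)" and "bounded (f ` K)"
      and g: "\<And>u x. u \<in> U \<Longrightarrow> x \<in> cyl A (u @ [a]) \<Longrightarrow> g u \<le> birkhoff m f x"
    then obtain B where B: "\<And>x. x \<in> K \<Longrightarrow> \<bar>f x\<bar> \<le> B" by (auto simp: bounded_real)
    interpret M: prob_space M by (rule prob_space_M)
    have "(\<Sum>u\<in>U. q u * g u) = (\<integral>s. g (clip (shd s)) \<partial>M)"
      by (simp add: integral_clip_shd pmf_Q qU_def mult.commute)
    also have "\<dots> \<le> (\<integral>s. birkhoff m f (loop_seq s) \<partial>M)"
      using g[OF clip_in_U loop_seq_in_cyl] integrable_loop_point[OF f B]
      by (intro integral_mono integrable_clip_shd) (auto simp: birkhoff_loop_seq)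
    finally show "integrable mu f \<and> (\<Sum>u\<in>U. q u * g u) \<le> m * integral\<^sup>L mu f"
      using integral_mu[OF f B] m_pos by simp
  qed (use mu_shift_invariant compact_K emeasure_mu_K in \<open>auto simp: K_def letters_def\<close>)
qed

section \<open>Gibbs states\<close>

lemma ln_le_iff_le_exp: "0 < (a::real) \<Longrightarrow> ln a \<le> b \<longleftrightarrow> a \<le> exp b"
  using ln_le_cancel_iff[of a "exp b"] by simp

lemma gibbs_cyl_bounds:
  assumes "gibbs_state A \<phi> \<mu> c0 P" "c0 \<ge> 1" "x \<in> shift_space A" "k \<ge> 1"
  shows "exp (- P * k + birkhoff k \<phi> x) / c0 \<le> measure \<mu> (cyl A (map x [0..<k]))"
    and "measure \<mu> (cyl A (map x [0..<k])) \<le> c0 * exp (- P * k + birkhoff k \<phi> x)"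
proof -
  define e where "e = exp (- P * k + birkhoff k \<phi> x)"
  define p where "p = measure \<mu> (cyl A (map x [0..<k]))"
  have e: "e > 0" by (simp add: e_def)
  have "inverse c0 \<le> p / e" "p / e \<le> c0"
    using assms unfolding gibbs_state_def p_def e_def by auto
  then have "inverse c0 * e \<le> p" "p \<le> c0 * e"
    using e by (simp_all add: pos_le_divide_eq pos_divide_le_eq mult.commute)
  then show "exp (- P * k + birkhoff k \<phi> x) / c0 \<le> measure \<mu> (cyl A (map x [0..<k]))"
    "measure \<mu> (cyl A (map x [0..<k])) \<le> c0 * exp (- P * k + birkhoff k \<phi> x)"
    unfolding p_def e_def by (simp_all add: divide_inverse_commute)
qed

lemma gibbs_cyl_pos:
  assumes "no_zero_rows_cols A" "gibbs_state A \<phi> \<mu> c0 P" "c0 \<ge> 1" "w \<in> adm_words A k" "k \<ge> 1"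
  shows "measure \<mu> (cyl A w) > 0"
proof -
  obtain x where x: "x \<in> cyl A w" using cyl_nonempty[OF assms(1,4)] assms(5) by auto
  then have "x \<in> shift_space A" "map x [0..<k] = w"
    using assms(4) map_cyl[OF x] by (simp_all add: cyl_def adm_words_def)
  have "0 < exp (- P * k + birkhoff k \<phi> x) / c0" using assms(3) by simp
  also have "\<dots> \<le> measure \<mu> (cyl A w)"
    using gibbs_cyl_bounds(1)[OF assms(2,3) \<open>x \<in> shift_space A\<close> assms(5)] \<open>map x [0..<k] = w\<close> by simp
  finally show ?thesis .
qed

lemma gibbs_cyl_le_exp_Inf:
  assumes "no_zero_rows_cols A" "gibbs_state A \<phi> \<mu> c0 P" "c0 \<ge> 1" "u \<in> adm_words A k" "k \<ge> 1"
  shows "bdd_below (birkhoff k \<phi> ` cyl A u)"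
    and "measure \<mu> (cyl A u) \<le> c0 * exp (- P * k + Inf (birkhoff k \<phi> ` cyl A u))"
proof -
  have pos: "measure \<mu> (cyl A u) > 0" by (rule gibbs_cyl_pos[OF assms])
  have lower: "ln (measure \<mu> (cyl A u) / c0) + P * k \<le> birkhoff k \<phi> x" if x: "x \<in> cyl A u" for x
  proof -
    have "map x [0..<k] = u" using assms(4) map_cyl[OF x] by (simp add: adm_words_def)
    then have "measure \<mu> (cyl A u) / c0 \<le> exp (- P * k + birkhoff k \<phi> x)"
      using gibbs_cyl_bounds(2)[OF assms(2,3) _ assms(5), of x] x assms(3)
      by (simp add: cyl_def pos_divide_le_eq mult.commute)
    then have "ln (measure \<mu> (cyl A u) / c0) \<le> - P * k + birkhoff k \<phi> x"
      using pos assms(3) by (subst ln_le_iff_le_exp) auto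
    then show ?thesis by simp
  qed
  then show "bdd_below (birkhoff k \<phi> ` cyl A u)" by (intro bdd_belowI2)
  have "ln (measure \<mu> (cyl A u) / c0) + P * k \<le> Inf (birkhoff k \<phi> ` cyl A u)"
    using cyl_nonempty[OF assms(1,4)] assms(5) lower by (intro cInf_greatest) auto
  then have "ln (measure \<mu> (cyl A u) / c0) \<le> - P * k + Inf (birkhoff k \<phi> ` cyl A u)" by simp
  then have "measure \<mu> (cyl A u) / c0 \<le> exp (- P * k + Inf (birkhoff k \<phi> ` cyl A u))"
    using pos assms(3) by (subst (asm) ln_le_iff_le_exp) auto
  then show "measure \<mu> (cyl A u) \<le> c0 * exp (- P * k + Inf (birkhoff k \<phi> ` cyl A u))"
    using assms(3) by (simp add: pos_divide_le_eq mult.commute)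
qed

text \<open>Both bounds come from the Gibbs inequality on cylinders of length one:
  \<open>\<phi> x \<le> P + ln c0\<close> and \<open>\<phi> x \<ge> ln (\<mu> [x 0] / c0) + P\<close>.\<close>
lemma gibbs_potential_bounded:
  assumes "gibbs_state A \<phi> \<mu> c0 P" "c0 \<ge> 1" "finite B"
  shows "bounded (\<phi> ` {x \<in> shift_space A. \<forall>i. x i \<in> B})"
proof -
  interpret prob_space \<mu> using assms(1) by (simp add: gibbs_state_def prob_on_X_def)
  define \<nu> where "\<nu> b = measure \<mu> (cyl A [b])" for b
  have bounds: "exp (- P + \<phi> x) / c0 \<le> \<nu> (x 0)" "\<nu> (x 0) \<le> c0 * exp (- P + \<phi> x)"
    if "x \<in> shift_space A" for x
    using gibbs_cyl_bounds[OF assms(1,2) that, of 1] by (simp_all add: birkhoff_def \<nu>_def)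
  have upper: "\<phi> x \<le> P + ln c0" if "x \<in> shift_space A" for x
  proof -
    have "exp (- P + \<phi> x) / c0 \<le> 1" using bounds(1)[OF that] prob_le_1[of "cyl A [x 0]"]
      unfolding \<nu>_def by linarith
    then have "exp (- P + \<phi> x) \<le> c0" using assms(2) by (simp add: pos_divide_le_eq)
    then have "- P + \<phi> x \<le> ln c0" using assms(2) by (subst ln_ge_iff) auto
    then show ?thesis by simp
  qed
  have lower: "ln (\<nu> (x 0) / c0) + P \<le> \<phi> x" if "x \<in> shift_space A" for x
  proof -
    have "0 < exp (- P + \<phi> x) / c0" using assms(2) by simp
    then have "0 < \<nu> (x 0)" using bounds(1)[OF that] by linarith
    moreover have "\<nu> (x 0) / c0 \<le> exp (- P + \<phi> x)"
      using bounds(2)[OF that] assms(2) by (simp add: pos_divide_le_eq mult.commute)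
    ultimately have "ln (\<nu> (x 0) / c0) \<le> - P + \<phi> x"
      using assms(2) by (subst ln_le_iff_le_exp) auto
    then show ?thesis by simp
  qed
  have "\<bar>\<phi> x\<bar> \<le> \<bar>P + ln c0\<bar> + (\<Sum>b\<in>B. \<bar>ln (\<nu> b / c0) + P\<bar>)"
    if "x \<in> shift_space A" "\<forall>i. x i \<in> B" for x
  proof -
    have "\<bar>ln (\<nu> (x 0) / c0) + P\<bar> \<le> (\<Sum>b\<in>B. \<bar>ln (\<nu> b / c0) + P\<bar>)"
      using that assms(3) by (intro member_le_sum) auto
    then show ?thesis using upper[OF that(1)] lower[OF that(1)] by linarith
  qed
  then show ?thesis by (auto simp: bounded_real)
qed

lemma free_energy_ge:
  assumes "shift_invariant A \<mu>" "\<phi> \<in> borel_measurable (borelX A)" "integrable \<mu> \<phi>"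
    and "ereal h \<le> ks_entropy \<mu>"
  shows "ereal (- P + h + integral\<^sup>L \<mu> \<phi>) \<le> free_energy A \<phi> P \<mu>"
proof -
  have "\<mu> \<in> M_phi A \<phi>"
    unfolding M_phi_def
  proof (intro CollectI conjI assms(1))
    have "sets \<mu> = sets (borelX A)" using assms(1) by (simp add: shift_invariant_def prob_on_X_def)
    then show "\<phi> \<in> borel_measurable \<mu>" using assms(2) measurable_cong_sets[of \<mu> "borelX A" borel borel]
      by simp
    have "(\<integral>\<^sup>+ x. ennreal (- \<phi> x) \<partial>\<mu>) \<le> (\<integral>\<^sup>+ x. ennreal (norm (\<phi> x)) \<partial>\<mu>)"
      by (intro nn_integral_mono) (simp add: ennreal_leI)
    also have "\<dots> < \<infinity>" using assms(3) by (simp add: integrable_iff_bounded)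
    finally show "(\<integral>\<^sup>+ x. ennreal (- \<phi> x) \<partial>\<mu>) < \<infinity>" .
  qed
  then have "free_energy A \<phi> P \<mu> = ereal (- P) + ks_entropy \<mu> + ereal (integral\<^sup>L \<mu> \<phi>)"
    by (simp add: free_energy_def)
  moreover have "ereal (- P) + ereal h + ereal (integral\<^sup>L \<mu> \<phi>)
      \<le> ereal (- P) + ks_entropy \<mu> + ereal (integral\<^sup>L \<mu> \<phi>)"
    using assms(4) by (intro add_mono order_refl)
  ultimately show ?thesis by simp
qed

lemma gibbs_measure_loops_le:
  assumes "no_zero_rows_cols A" "gibbs_state A \<phi> \<mu> c0 P" "c0 \<ge> 1" "finite U" "U \<noteq> {}" "m > 0"
    and loops: "(\<lambda>u. u @ [a]) ` U \<subseteq> adm_words_ab A (Suc m) a a"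
  defines "t u \<equiv> - P * m + Inf (birkhoff m \<phi> ` cyl A u)"
  shows "0 < measure \<mu> (cylset A ((\<lambda>u. u @ [a]) ` U))"
    and "measure \<mu> (cylset A ((\<lambda>u. u @ [a]) ` U)) \<le> c0 * (\<Sum>u\<in>U. exp (t u))"
proof -
  interpret prob_space \<mu> using assms(2) by (simp add: gibbs_state_def prob_on_X_def)
  have sets: "cyl A w \<in> sets \<mu>" for w
    using assms(2) sets_cyl by (simp add: gibbs_state_def prob_on_X_def)
  have adm: "u \<in> adm_words A m" if "u \<in> U" for u
    using loops that by (auto intro: loop_prefix_adm)
  obtain u where u: "u \<in> U" using assms(5) by blast
  have "0 < measure \<mu> (cyl A (u @ [a]))"
    using loops u assms(1-3) by (intro gibbs_cyl_pos[where k="Suc m"]) (auto simp: adm_words_ab_def)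
  also have "\<dots> \<le> measure \<mu> (cylset A ((\<lambda>u. u @ [a]) ` U))"
    using u assms(4) sets by (intro finite_measure_mono) (auto simp: cylset_def)
  finally show "0 < measure \<mu> (cylset A ((\<lambda>u. u @ [a]) ` U))" .
  have "cylset A ((\<lambda>u. u @ [a]) ` U) \<subseteq> (\<Union>u\<in>U. cyl A u)"
    by (auto simp: cylset_def cyl_def nth_append)
  then have "measure \<mu> (cylset A ((\<lambda>u. u @ [a]) ` U)) \<le> measure \<mu> (\<Union>u\<in>U. cyl A u)"
    using assms(4) sets by (intro finite_measure_mono) auto
  also have "\<dots> \<le> (\<Sum>u\<in>U. measure \<mu> (cyl A u))"
    using assms(4) sets by (intro finite_measure_subadditive_finite) auto
  also have "\<dots> \<le> (\<Sum>u\<in>U. c0 * exp (t u))"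
    unfolding t_def using adm assms(1-3,6)
    by (intro sum_mono gibbs_cyl_le_exp_Inf(2)) auto
  finally show "measure \<mu> (cylset A ((\<lambda>u. u @ [a]) ` U)) \<le> c0 * (\<Sum>u\<in>U. exp (t u))"
    by (simp add: sum_distrib_left)
qed

lemma ln_le_free_energy:
  fixes t :: "'a \<Rightarrow> real" and m :: nat and P :: real
  assumes "finite U" "U \<noteq> {}" "m > 0" "c0 > 0" "p > 0"
    and \<mu>: "shift_invariant A \<mu>" "\<phi> \<in> borel_measurable (borelX A)" "integrable \<mu> \<phi>"
  defines "Z \<equiv> \<Sum>u\<in>U. exp (t u)"
  assumes "p \<le> c0 * Z"
    and entropy: "ereal ((\<Sum>u\<in>U. eta (exp (t u) / Z)) / m) \<le> ks_entropy \<mu>"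
    and mean: "(\<Sum>u\<in>U. exp (t u) / Z * (t u + P * m)) \<le> m * integral\<^sup>L \<mu> \<phi>"
  shows "ereal (ln p) \<le> free_energy A \<phi> P \<mu> * ereal (real m) + ereal (ln c0)"
proof -
  let ?H = "\<Sum>u\<in>U. eta (exp (t u) / Z)"
  have Z: "Z > 0" unfolding Z_def using assms(1,2) by (intro sum_pos) auto
  have "(\<Sum>u\<in>U. exp (t u) / Z * (t u + P * m)) = (\<Sum>u\<in>U. exp (t u) / Z * t u) + P * m"
    using Z sum_distrib_right[of "\<lambda>u. exp (t u) / Z" U "P * m"]
    by (simp add: distrib_left sum.distrib Z_def flip: sum_divide_distrib)
  moreover have "m * (- P + ?H / m + integral\<^sup>L \<mu> \<phi>) = - P * m + ?H + m * integral\<^sup>L \<mu> \<phi>"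
    using assms(3) by (simp add: field_simps)
  moreover have "ln p \<le> ln (c0 * Z)" using assms(4,5) \<open>p \<le> c0 * Z\<close> Z by simp
  moreover have "ln (c0 * Z) = ln c0 + ?H + (\<Sum>u\<in>U. exp (t u) / Z * t u)"
    using assms(4) Z ln_sum_exp_eq[OF assms(1,2), of t] by (simp add: ln_mult Z_def)
  ultimately have "ereal (ln p) \<le> ereal (- P + ?H / m + integral\<^sup>L \<mu> \<phi>) * ereal (real m) + ereal (ln c0)"
    using mean by (simp add: mult.commute)
  also have "\<dots> \<le> free_energy A \<phi> P \<mu> * ereal (real m) + ereal (ln c0)"
    using free_energy_ge[OF \<mu> entropy] by (intro add_mono order_refl ereal_mult_right_mono) auto
  finally show ?thesis .
qed

text \<open>The measure of the proposition: loops drawn independently with weights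
  \<open>q u \<propto> exp (inf\<^bsub>[u]\<^esub> S\<^sub>m \<phi> - P m)\<close>.\<close>
lemma gibbs_loop_measure:
  assumes nz: "no_zero_rows_cols A" and \<phi>: "\<phi> \<in> borel_measurable (borelX A)"
    and c0: "c0 \<ge> 1" and gibbs: "gibbs_state A \<phi> \<mu>\<phi> c0 P"
    and U: "finite U" "U \<noteq> {}" and m: "m > 0"
    and loops: "(\<lambda>u. u @ [a]) ` U \<subseteq> adm_words_ab A (Suc m) a a"
  obtains \<mu> K where "shift_invariant A \<mu>" "compact K" "K \<subseteq> shift_space A" "emeasure \<mu> K = 1"
    "ereal (ln (measure \<mu>\<phi> (cylset A ((\<lambda>u. u @ [a]) ` U))))
      \<le> free_energy A \<phi> P \<mu> * ereal (real m) + ereal (ln c0)"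
    "\<forall>f c. continuous_on (shift_space A) f \<and>
       (\<forall>x\<in>cylset A ((\<lambda>u. u @ [a]) ` U). c \<le> birkhoff m f x) \<longrightarrow> c \<le> m * integral\<^sup>L \<mu> f"
proof -
  define t where "t u = - P * m + Inf (birkhoff m \<phi> ` cyl A u)" for u
  define Z where "Z = (\<Sum>u\<in>U. exp (t u))"
  have Z: "Z > 0" unfolding Z_def using U by (intro sum_pos) auto
  have q: "(\<Sum>u\<in>U. exp (t u) / Z) = 1" using Z by (simp add: Z_def flip: sum_divide_distrib)
  have q_nonneg: "\<And>u. u \<in> U \<Longrightarrow> 0 \<le> exp (t u) / Z" using Z by simp
  show ?thesis
  proof (rule invariant_measure_from_loops[OF U m loops q_nonneg q])
    fix \<mu> K assume \<mu>: "shift_invariant A \<mu>" "compact K" "K \<subseteq> shift_space A" "emeasure \<mu> K = 1"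
      and K: "K \<subseteq> {x. \<forall>i. x i \<in> \<Union> (set ` U)}"
      and entropy: "ereal ((\<Sum>u\<in>U. eta (exp (t u) / Z)) / m) \<le> ks_entropy \<mu>"
      and integral: "\<And>f g. f \<in> borel_measurable (borelX A) \<Longrightarrow> bounded (f ` K) \<Longrightarrow>
         (\<And>u x. u \<in> U \<Longrightarrow> x \<in> cyl A (u @ [a]) \<Longrightarrow> g u \<le> birkhoff m f x) \<Longrightarrow>
         integrable \<mu> f \<and> (\<Sum>u\<in>U. exp (t u) / Z * g u) \<le> m * integral\<^sup>L \<mu> f"
    have "bounded (\<phi> ` {x \<in> shift_space A. \<forall>i. x i \<in> \<Union> (set ` U)})"
      using U(1) by (intro gibbs_potential_bounded[OF gibbs c0]) simp
    then have \<phi>_bounded: "bounded (\<phi> ` K)" by (rule bounded_subset) (use K \<mu>(3) in auto)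
    have t_le: "t u + P * m \<le> birkhoff m \<phi> x" if "u \<in> U" "x \<in> cyl A (u @ [a])" for u x
    proof -
      have "u \<in> adm_words A m" "x \<in> cyl A u"
        using loops that loop_prefix_adm by (auto simp: cyl_def nth_append)
      then show ?thesis
        using gibbs_cyl_le_exp_Inf(1)[OF nz gibbs c0, of u m] m unfolding t_def by (simp add: cInf_lower)
    qed
    have mean: "integrable \<mu> \<phi> \<and> (\<Sum>u\<in>U. exp (t u) / Z * (t u + P * m)) \<le> m * integral\<^sup>L \<mu> \<phi>"
      by (rule integral[OF \<phi> \<phi>_bounded t_le])
    have "ereal (ln (measure \<mu>\<phi> (cylset A ((\<lambda>u. u @ [a]) ` U))))
        \<le> free_energy A \<phi> P \<mu> * ereal (real m) + ereal (ln c0)"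
      using ln_le_free_energy[OF U m _ _ \<mu>(1) \<phi> conjunct1[OF mean] _ entropy[unfolded Z_def]
          conjunct2[OF mean, unfolded Z_def]] gibbs_measure_loops_le[OF nz gibbs c0 U m loops] c0
      unfolding t_def by simp
    moreover have "c \<le> m * integral\<^sup>L \<mu> f"
      if f: "continuous_on (shift_space A) f" and c: "\<forall>x\<in>cylset A ((\<lambda>u. u @ [a]) ` U). c \<le> birkhoff m f x"
      for f c
    proof -
      have "f \<in> borel_measurable (borelX A)"
        unfolding borelX_def by (rule borel_measurable_continuous_on_restrict[OF f])
      moreover have "bounded (f ` K)"
        using compact_continuous_image[OF continuous_on_subset[OF f \<mu>(3)] \<mu>(2)]
        by (rule compact_imp_bounded)
      ultimately have "(\<Sum>u\<in>U. exp (t u) / Z * c) \<le> m * integral\<^sup>L \<mu> f"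
        using integral[of f "\<lambda>_. c"] c by (auto simp: cylset_def)
      moreover have "(\<Sum>u\<in>U. exp (t u) / Z * c) = c" using q by (metis mult_1_left sum_distrib_right)
      ultimately show ?thesis by simp
    qed
    ultimately show thesis using that \<mu> by blast
  qed
qed

lemma ereal_less_INF_obtain:
  assumes "ereal c < (INF x\<in>S. ereal (f x))"
  obtains I where "c < I" "\<And>x. x \<in> S \<Longrightarrow> I \<le> f x"
proof -
  obtain I where "c < I" "ereal I < (INF x\<in>S. ereal (f x))"
    using ereal_dense2[OF assms] by auto
  moreover have "I \<le> f x" if "x \<in> S" for x
  proof -
    have "ereal I \<le> ereal (f x)"
      using \<open>ereal I < _\<close> INF_lower[OF that] by (rule order.strict_trans2[THEN less_imp_le])
    then show ?thesis by simp
  qed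
  ultimately show ?thesis using that by blast
qed

lemma loops_of_closed_words:
  assumes "G \<subseteq> adm_words_ab A (Suc m) a a"
  shows "(\<lambda>u. u @ [a]) ` take m ` G = G"
proof -
  have "take m w @ [a] = w" if "w \<in> G" for w
    using assms that take_Suc_conv_app_nth[of m w]
    by (auto simp: adm_words_ab_def adm_words_def)
  then show ?thesis by (force simp: image_comp)
qed

theorem lemma4p3:
  fixes A :: "nat \<Rightarrow> nat \<Rightarrow> bool"
    and \<phi> :: "(nat \<Rightarrow> nat) \<Rightarrow> real"
    and \<mu>\<phi> :: "(nat \<Rightarrow> nat) measure"
    and c0 P :: real
    and l :: nat
    and \<psi> :: "nat \<Rightarrow> (nat \<Rightarrow> nat) \<Rightarrow> real"
    and \<alpha> :: "nat \<Rightarrow> real"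
  assumes "no_zero_rows_cols A"
    and "\<phi> \<in> borel_measurable (borelX A)"
    and "c0 \<ge> 1"
    and "gibbs_state A \<phi> \<mu>\<phi> c0 P"
    and "l \<ge> 1"
    and "\<forall>j\<in>{1..l}. continuous_on (shift_space A) (\<psi> j)"
  shows "\<exists>n1::nat. n1 > 1 \<and>
    (\<forall>n\<ge>n1. \<forall>a::nat. \<forall>G. finite G \<and> G \<noteq> {} \<and> G \<subseteq> adm_words_ab A n a a \<and>
       (\<forall>j\<in>{1..l}. (INF x\<in>cylset A G. ereal (birkhoff (n - 1) (\<psi> j) x)) > ereal (\<alpha> j * real (n - 1)))
     \<longrightarrow> (\<exists>\<mu>. shift_invariant A \<mu> \<and>
            (\<exists>K. compact K \<and> K \<subseteq> shift_space A \<and> emeasure \<mu> K = 1) \<and>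
            ereal (ln (measure \<mu>\<phi> (cylset A G)))
              \<le> free_energy A \<phi> P \<mu> * ereal (real (n - 1)) + ereal (ln c0) \<and>
            (\<forall>j\<in>{1..l}. integral\<^sup>L \<mu> (\<psi> j) > \<alpha> j)))"
proof (intro exI[of _ "2::nat"] conjI allI impI)
  fix n a G assume n: "n \<ge> (2::nat)" and G: "finite G \<and> G \<noteq> {} \<and> G \<subseteq> adm_words_ab A n a a \<and>
    (\<forall>j\<in>{1..l}. (INF x\<in>cylset A G. ereal (birkhoff (n - 1) (\<psi> j) x)) > ereal (\<alpha> j * real (n - 1)))"
  define m where "m = n - 1"
  have m: "m > 0" "n = Suc m" using n by (auto simp: m_def)
  have loops: "(\<lambda>u. u @ [a]) ` take m ` G = G" using G loops_of_closed_words[of G A m a] m by auto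
  have U: "finite (take m ` G)" "take m ` G \<noteq> {}" using G by auto
  have adm: "(\<lambda>u. u @ [a]) ` take m ` G \<subseteq> adm_words_ab A (Suc m) a a" using G m loops by simp
  obtain \<mu> K
    where \<mu>: "shift_invariant A \<mu>" "compact K" "K \<subseteq> shift_space A" "emeasure \<mu> K = 1"
      "ereal (ln (measure \<mu>\<phi> (cylset A G))) \<le> free_energy A \<phi> P \<mu> * ereal (real m) + ereal (ln c0)"
      and integral: "\<forall>f c. continuous_on (shift_space A) f \<and>
        (\<forall>x\<in>cylset A G. c \<le> birkhoff m f x) \<longrightarrow> c \<le> m * integral\<^sup>L \<mu> f"
    by (rule gibbs_loop_measure[OF assms(1-4) U m(1) adm, unfolded loops]) (rule that)
  have "\<alpha> j < integral\<^sup>L \<mu> (\<psi> j)" if j: "j \<in> {1..l}" for j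
  proof -
    obtain I where I: "\<alpha> j * m < I" "\<forall>x\<in>cylset A G. I \<le> birkhoff m (\<psi> j) x"
      using G j ereal_less_INF_obtain unfolding m_def by metis
    then have "m * \<alpha> j < m * integral\<^sup>L \<mu> (\<psi> j)"
      using integral assms(6) j by (simp add: mult.commute less_le_trans)
    then show ?thesis using m(1) by simp
  qed
  then show "\<exists>\<mu>. shift_invariant A \<mu> \<and> (\<exists>K. compact K \<and> K \<subseteq> shift_space A \<and> emeasure \<mu> K = 1) \<and>
      ereal (ln (measure \<mu>\<phi> (cylset A G))) \<le> free_energy A \<phi> P \<mu> * ereal (real (n - 1)) + ereal (ln c0) \<and>
      (\<forall>j\<in>{1..l}. \<alpha> j < integral\<^sup>L \<mu> (\<psi> j))"
    using \<mu> unfolding m_def by blast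
qed simp

end
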